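(* Consider the LTI MIMO state-space model $$\alpha_{k+1}=T\alpha_k+Bx_k+\eta_k,\qquad y_k=Z\alpha_k+\beta x_k+\varepsilon_k,\qquad \begin{bmatrix}\eta_k\\ \varepsilon_k\end{bmatrix}\sim\mathcal N\!\left(0,\begin{bmatrix}Q&S\\ S^\top&H\end{bmatrix}\right),$$ $\alpha_0\sim\mathcal N(\bar\alpha_0,\Pi_0)$, $\Pi_0>0$, $H>0$, where the quantities $T,B,Z,\beta,Q,S,H,\bar\alpha_0,\Pi_0$ depend differentiably on a parameter vector $\theta\in\mathbb R^p$, while the observations $y_k$ and explanatory variables $x_k$ do not depend on $\theta$. For a matrix-valued function $A(\theta)$ write $\partial_iA:=\partial A/\partial\theta_i$. Let $\overline T=T-SH^{-1}Z$, $\overline B=B-SH^{-1}\beta$, $\overline Q=Q-SH^{-1}S^\top$. Algorithm 1a (UD-based LTI MIMO KF): factor $\Pi_0=\bar U_{\Pi_0}D_{\Pi_0}\bar U_{\Pi_0}^\top$, $H=\bar U_HD_H\bar U_H^\top$, $\overline Q=\bar U_{\overline Q}D_{\overline Q}\bar U_{\overline Q}^\top$; set $\hat\alpha_{0|0}=\bar\alpha_0$, $\bar U_{P_{0|0}}=\bar U_{\Pi_0}$, $D_{P_{0|0}}=D_{\Pi_0}$; for $k=1,\dots,N$: $\hat\alpha_{k|k-1}=\overline T\hat\alpha_{k-1|k-1}+\overline Bx_{k-1}+SH^{-1}y_{k-1}$; MWGS on $\mathbb A^\top=[\overline T\bar U_{P_{k-1|k-1}}\ \bar U_{\overline Q}]$,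 $\mathbb D_A=D_{P_{k-1|k-1}}\oplus D_{\overline Q}$ gives $\mathbb R=\bar U_{P_{k|k-1}}$, $\mathbb D_R=D_{P_{k|k-1}}$ (time update); MWGS on $\mathbb A^\top=\begin{bmatrix}\bar U_{P_{k|k-1}}&0\\ Z\bar U_{P_{k|k-1}}&\bar U_H\end{bmatrix}$, $\mathbb D_A=D_{P_{k|k-1}}\oplus D_H$ gives $\mathbb R=\begin{bmatrix}\bar U_{P_{k|k}}&\bar K_k^u\\0&\bar U_{R_{e,k}}\end{bmatrix}$, $\mathbb D_R=D_{P_{k|k}}\oplus D_{R_{e,k}}$ (measurement update); $e_k=y_k-Z\hat\alpha_{k|k-1}-\beta x_k$, $\bar e_k=\bar U_{R_{e,k}}^{-1}e_k$, $\hat\alpha_{k|k}=\hat\alpha_{k|k-1}+\bar K_k^u\bar e_k$. Algorithm 1b (differentiated UD-based LTI MIMO KF): for each $i=1,\dots,p$, in addition to running Algorithm 1a, it initializes with $\partial_i\bar U_{P_{0|0}}=\partial_i\bar U_{\Pi_0}$, $\partial_iD_{P_{0|0}}=\partial_iD_{\Pi_0}$, $\partial_i\hat\alpha_{0|0}=\partial_i\bar\alpha_0$ (using $\partial_i\overline T,\partial_i\overline B,\partial_i\overline Q$ and the derivatives of the factors of $\overline Q$ and $H$), and for $k=1,\dots,N$ computes: (a) $\partial_i\hat\alpha_{k|k-1}=(\partial_i\overline T)\hat\alpha_{k-1|k-1}+\overline T\,\partial_i\hat\alpha_{k-1|k-1}+(\partial_i\overline B)x_{k-1}+(\partial_iS)H^{-1}y_{k-1}-SH^{-1}(\partial_iH)H^{-1}y_{k-1}$;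 (b) in both the time and the measurement update, forms the pre-arrays $\mathbb A,\mathbb D_A$ of Algorithm 1a and their derivatives $\partial_i\mathbb A,\partial_i\mathbb D_A$, applies the Diff. UD scheme below to obtain $\mathbb R,\mathbb D_R,\partial_i\mathbb R,\partial_i\mathbb D_R$, and reads off the blocks $\partial_i\bar U_{P_{k|k-1}},\partial_iD_{P_{k|k-1}},\partial_i\bar U_{P_{k|k}},\partial_iD_{P_{k|k}},\partial_i\bar U_{R_{e,k}},\partial_iD_{R_{e,k}},\partial_i\bar K_k^u$ from the same positions as the corresponding undifferentiated blocks; (c) $\partial_i\bar e_k=-\bar U_{R_{e,k}}^{-1}(\partial_i\bar U_{R_{e,k}})\bar U_{R_{e,k}}^{-1}e_k-\bar U_{R_{e,k}}^{-1}\big[(\partial_iZ)\hat\alpha_{k|k-1}+Z\,\partial_i\hat\alpha_{k|k-1}+(\partial_i\beta)x_k\big]$; (d) $\partial_i\hat\alpha_{k|k}=\partial_i\hat\alpha_{k|k-1}+(\partial_i\bar K_k^u)\bar e_k+\bar K_k^u\,\partial_i\bar e_k$. Diff. UD scheme with inputs $\mathbb A,\mathbb D_A,\partial_i\mathbb A,\partial_i\mathbb D_A$: apply MWGS to obtain $\mathfrak W,\mathbb R,\mathbb D_R$; set $M_0=\mathfrak W^\top\mathbb D_A(\partial_i\mathbb A)\mathbb R^{-\top}$ and split $M_0=\bar L_0+D_0+\bar U_0$ into strictly lower triangular, diagonal and strictly upper triangular parts; set $M_2=\mathfrak W^\top(\partial_i\mathbb D_A)\mathfrak W$ and split $M_2=\bar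 L_2+D_2+\bar U_2$ likewise; output $\partial_i\mathbb R=\mathbb R(\bar L_0^\top+\bar U_0+\bar U_2)\mathbb D_R^{-1}$ and $\partial_i\mathbb D_R=2D_0+D_2$. Then Algorithm 1b computes the filter sensitivities of Algorithm 1a correctly: for every $k$ and $i$, the quantities it produces as $\partial_i\hat\alpha_{k|k-1}$, $\partial_i\bar U_{P_{k|k-1}}$, $\partial_iD_{P_{k|k-1}}$, $\partial_i\bar U_{P_{k|k}}$, $\partial_iD_{P_{k|k}}$, $\partial_i\bar U_{R_{e,k}}$, $\partial_iD_{R_{e,k}}$, $\partial_i\bar K_k^u$, $\partial_i\bar e_k$, $\partial_i\hat\alpha_{k|k}$ equal the partial derivatives with respect to $\theta_i$ of the corresponding quantities computed by Algorithm 1a, regarded as functions of $\theta$.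
   Context: $UDU^\top$ factorization: $P=\bar U_PD_P\bar U_P^\top$ with $\bar U_P$ unit upper triangular and $D_P$ diagonal. $A\oplus B:=\mathrm{diag}\{A,B\}$. MWGS: given $\mathbb A\in\mathbb R^{r\times s}$ ($r\ge s$) and diagonal $\mathbb D_A>0$, it returns the matrix $\mathfrak W\in\mathbb R^{r\times s}$, a unit upper triangular $\mathbb R\in\mathbb R^{s\times s}$ and a diagonal $\mathbb D_R\in\mathbb R^{s\times s}$ with $\mathbb A^\top=\mathbb R\mathfrak W^\top$ and $\mathfrak W^\top\mathbb D_A\mathfrak W=\mathbb D_R$. It is assumed that every MWGS call is well defined (pre-arrays as required, with $\mathbb D_R$ invertible) and that all quantities involved are differentiable in $\theta$. *)

theory Defs
  imports "Jordan_Normal_Form.Gauss_Jordan_Elimination" "HOL-Analysis.Euclidean_Space"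
begin

definition minv :: "real mat \<Rightarrow> real mat" where
  "minv A = (case mat_inverse A of Some B \<Rightarrow> B | None \<Rightarrow> 0\<^sub>m (dim_row A) (dim_col A))"

definition dsum :: "real mat \<Rightarrow> real mat \<Rightarrow> real mat" where
  "dsum A B = four_block_mat A (0\<^sub>m (dim_row A) (dim_col B)) (0\<^sub>m (dim_row B) (dim_col A)) B"

definition hcat :: "real mat \<Rightarrow> real mat \<Rightarrow> real mat" where
  "hcat A B = mat (dim_row A) (dim_col A + dim_col B)
     (\<lambda>(i,j). if j < dim_col A then A $$ (i,j) else B $$ (i, j - dim_col A))"

definition blk :: "real mat \<Rightarrow> nat \<Rightarrow> nat \<Rightarrow> nat \<Rightarrow> nat \<Rightarrow> real mat" where
  "blk M r0 c0 nr nc = mat nr nc (\<lambda>(i,j). M $$ (r0 + i, c0 + j))"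

definition strict_lower :: "real mat \<Rightarrow> real mat" where
  "strict_lower M = mat (dim_row M) (dim_col M) (\<lambda>(i,j). if j < i then M $$ (i,j) else 0)"

definition diag_part :: "real mat \<Rightarrow> real mat" where
  "diag_part M = mat (dim_row M) (dim_col M) (\<lambda>(i,j). if i = j then M $$ (i,j) else 0)"

definition strict_upper :: "real mat \<Rightarrow> real mat" where
  "strict_upper M = mat (dim_row M) (dim_col M) (\<lambda>(i,j). if i < j then M $$ (i,j) else 0)"

definition unit_upper_triangular :: "real mat \<Rightarrow> bool" where
  "unit_upper_triangular U \<longleftrightarrow> square_mat U \<and> upper_triangular U \<and> (\<forall>i<dim_row U. U $$ (i,i) = 1)"

definition pos_def_mat :: "real mat \<Rightarrow> bool" where
  "pos_def_mat M \<longleftrightarrow> square_mat M \<and> M = transpose_mat M \<and>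
     (\<forall>v\<in>carrier_vec (dim_row M). v \<noteq> 0\<^sub>v (dim_row M) \<longrightarrow> scalar_prod v (M *\<^sub>v v) > 0)"

definition pos_semidef_mat :: "real mat \<Rightarrow> bool" where
  "pos_semidef_mat M \<longleftrightarrow> square_mat M \<and> M = transpose_mat M \<and>
     (\<forall>v\<in>carrier_vec (dim_row M). scalar_prod v (M *\<^sub>v v) \<ge> 0)"

definition udu :: "real mat \<Rightarrow> real mat \<Rightarrow> real mat \<Rightarrow> bool" where
  "udu P U D \<longleftrightarrow> (\<exists>n. P \<in> carrier_mat n n \<and> U \<in> carrier_mat n n \<and> D \<in> carrier_mat n n)
     \<and> unit_upper_triangular U \<and> diagonal_mat D \<and> P = U * D * transpose_mat U"

definition mwgs :: "real mat \<Rightarrow> real mat \<Rightarrow> real mat \<Rightarrow> real mat \<Rightarrow> real mat \<Rightarrow> bool" where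
  "mwgs A DA W R DR \<longleftrightarrow>
     (let r = dim_row A; s = dim_col A in
       s \<le> r \<and> DA \<in> carrier_mat r r \<and> diagonal_mat DA \<and> (\<forall>j<r. DA $$ (j,j) > 0)
       \<and> W \<in> carrier_mat r s \<and> R \<in> carrier_mat s s \<and> DR \<in> carrier_mat s s
       \<and> unit_upper_triangular R \<and> diagonal_mat DR \<and> (\<forall>j<s. DR $$ (j,j) \<noteq> 0)
       \<and> transpose_mat A = R * transpose_mat W
       \<and> transpose_mat W * DA * W = DR)"

(* Diff. UD scheme: inputs are the MWGS outputs W, R, D_R, the weight D_A and
   the derivatives dA = \<partial>_i A, dDA = \<partial>_i D_A *)
definition diffUD_M0 :: "real mat \<Rightarrow> real mat \<Rightarrow> real mat \<Rightarrow> real mat \<Rightarrow> real mat" where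
  "diffUD_M0 W R DA dA = transpose_mat W * DA * dA * transpose_mat (minv R)"

definition diffUD_M2 :: "real mat \<Rightarrow> real mat \<Rightarrow> real mat" where
  "diffUD_M2 W dDA = transpose_mat W * dDA * W"

definition diffUD_R :: "real mat \<Rightarrow> real mat \<Rightarrow> real mat \<Rightarrow> real mat \<Rightarrow> real mat \<Rightarrow> real mat \<Rightarrow> real mat" where
  "diffUD_R W R DR DA dA dDA =
     (let M0 = diffUD_M0 W R DA dA; M2 = diffUD_M2 W dDA in
      R * (transpose_mat (strict_lower M0) + strict_upper M0 + strict_upper M2) * minv DR)"

definition diffUD_D :: "real mat \<Rightarrow> real mat \<Rightarrow> real mat \<Rightarrow> real mat \<Rightarrow> real mat \<Rightarrow> real mat" where
  "diffUD_D W R DA dA dDA =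
     (let M0 = diffUD_M0 W R DA dA; M2 = diffUD_M2 W dDA in
      2 \<cdot>\<^sub>m diag_part M0 + diag_part M2)"

definition deriv0 :: "(real \<Rightarrow> real) \<Rightarrow> real" where
  "deriv0 g = (SOME D. (g has_real_derivative D) (at 0))"

(* partial derivative \<partial>_i along the basis vector i of \<theta>-space *)
definition mat_pd :: "'a::euclidean_space \<Rightarrow> ('a \<Rightarrow> real mat) \<Rightarrow> 'a \<Rightarrow> real mat" where
  "mat_pd i F \<theta> = mat (dim_row (F \<theta>)) (dim_col (F \<theta>))
     (\<lambda>(a,b). deriv0 (\<lambda>t. F (\<theta> + t *\<^sub>R i) $$ (a,b)))"

definition vec_pd :: "'a::euclidean_space \<Rightarrow> ('a \<Rightarrow> real vec) \<Rightarrow> 'a \<Rightarrow> real vec" where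
  "vec_pd i v \<theta> = vec (dim_vec (v \<theta>)) (\<lambda>a. deriv0 (\<lambda>t. v (\<theta> + t *\<^sub>R i) $ a))"

definition mat_diff :: "nat \<Rightarrow> nat \<Rightarrow> ('a::euclidean_space \<Rightarrow> real mat) \<Rightarrow> bool" where
  "mat_diff nr nc F \<longleftrightarrow> (\<forall>\<theta>. F \<theta> \<in> carrier_mat nr nc) \<and>
     (\<forall>\<theta>. \<forall>a<nr. \<forall>b<nc. (\<lambda>\<theta>'. F \<theta>' $$ (a,b)) differentiable (at \<theta>))"

definition vec_diff :: "nat \<Rightarrow> ('a::euclidean_space \<Rightarrow> real vec) \<Rightarrow> bool" where
  "vec_diff nr v \<longleftrightarrow> (\<forall>\<theta>. v \<theta> \<in> carrier_vec nr) \<and>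
     (\<forall>\<theta>. \<forall>a<nr. (\<lambda>\<theta>'. v \<theta>' $ a) differentiable (at \<theta>))"

end

theory Submission
  imports Defs "Jordan_Normal_Form.Determinant"
begin

text \<open>
  Fix a direction \<open>i\<close> and a parameter value \<open>\<theta>\<close>, and restrict every quantity of Algorithm 1a
  to the line \<open>t \<mapsto> \<theta> + t i\<close>; the claim is then proved by induction on \<open>k\<close>, differentiating
  each step of the recursion at \<open>t = 0\<close>. Steps (a), (c) and (d) are the product rule together
  with \<open>\<partial>(U\<^sup>-\<^sup>1) = -U\<^sup>-\<^sup>1 (\<partial>U) U\<^sup>-\<^sup>1\<close>. For an MWGS call, differentiating the Gram identity
  \<open>A\<^sup>T D\<^sub>A A = R D\<^sub>R R\<^sup>T\<close> and applying the congruence by \<open>R\<^sup>-\<^sup>1\<close> gives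
  \<open>M\<^sub>0\<^sup>T + M\<^sub>2 + M\<^sub>0 = X + \<partial>D\<^sub>R + X\<^sup>T\<close> with \<open>X = R\<^sup>-\<^sup>1 (\<partial>R) D\<^sub>R\<close>. As \<open>R\<close> stays unit upper
  triangular and \<open>D\<^sub>R\<close> diagonal, \<open>X\<close> is strictly upper triangular and \<open>\<partial>D\<^sub>R\<close> is diagonal, so
  the strictly upper and the diagonal part of this identity are exactly the Diff. UD formulas (b).
\<close>

subsection \<open>Derivatives of matrix curves\<close>

definition has_mat_deriv :: "nat \<Rightarrow> nat \<Rightarrow> (real \<Rightarrow> real mat) \<Rightarrow> real mat \<Rightarrow> real \<Rightarrow> bool" where
  "has_mat_deriv nr nc f F x \<longleftrightarrow> (\<forall>t. f t \<in> carrier_mat nr nc) \<and> F \<in> carrier_mat nr nc \<and>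
     (\<forall>a<nr. \<forall>b<nc. ((\<lambda>t. f t $$ (a,b)) has_real_derivative F $$ (a,b)) (at x))"

definition has_vec_deriv :: "nat \<Rightarrow> (real \<Rightarrow> real vec) \<Rightarrow> real vec \<Rightarrow> real \<Rightarrow> bool" where
  "has_vec_deriv nr f F x \<longleftrightarrow> (\<forall>t. f t \<in> carrier_vec nr) \<and> F \<in> carrier_vec nr \<and>
     (\<forall>a<nr. ((\<lambda>t. f t $ a) has_real_derivative F $ a) (at x))"

lemma has_mat_derivD:
  assumes "has_mat_deriv nr nc f F x"
  shows "f t \<in> carrier_mat nr nc" "F \<in> carrier_mat nr nc"
    and "a < nr \<Longrightarrow> b < nc \<Longrightarrow> ((\<lambda>t. f t $$ (a,b)) has_real_derivative F $$ (a,b)) (at x)"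
  using assms unfolding has_mat_deriv_def by auto

lemma has_vec_derivD:
  assumes "has_vec_deriv nr f F x"
  shows "f t \<in> carrier_vec nr" "F \<in> carrier_vec nr"
    and "a < nr \<Longrightarrow> ((\<lambda>t. f t $ a) has_real_derivative F $ a) (at x)"
  using assms unfolding has_vec_deriv_def by auto

lemma has_mat_deriv_dim:
  assumes "has_mat_deriv nr nc f F x"
  shows "dim_row (f t) = nr" "dim_col (f t) = nc" "dim_row F = nr" "dim_col F = nc"
  using has_mat_derivD(1,2)[OF assms] by auto

lemma has_vec_deriv_dim:
  assumes "has_vec_deriv nr f F x"
  shows "dim_vec (f t) = nr" "dim_vec F = nr"
  using has_vec_derivD(1,2)[OF assms] by auto

lemma has_mat_deriv_unique:
  "has_mat_deriv nr nc f F x \<Longrightarrow> has_mat_deriv nr nc f G x \<Longrightarrow> F = G"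
  unfolding has_mat_deriv_def by (intro eq_matI) (metis DERIV_unique carrier_matD)+

lemma has_mat_deriv_exists:
  assumes "\<And>t. f t \<in> carrier_mat nr nc"
    and "\<And>a b. a < nr \<Longrightarrow> b < nc \<Longrightarrow> (\<lambda>t. f t $$ (a,b)) differentiable (at x)"
  obtains F where "has_mat_deriv nr nc f F x"
proof
  show "has_mat_deriv nr nc f
      (mat nr nc (\<lambda>(a,b). SOME D. ((\<lambda>t. f t $$ (a,b)) has_real_derivative D) (at x))) x"
    using assms unfolding has_mat_deriv_def real_differentiable_def by (auto intro: someI_ex)
qed

lemma has_mat_deriv_entry_const:
  assumes "has_mat_deriv nr nc f F x" "a < nr" "b < nc" "\<And>t. f t $$ (a,b) = c"
  shows "F $$ (a,b) = 0"
proof -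
  have "((\<lambda>t. c) has_real_derivative F $$ (a,b)) (at x)"
    using has_mat_derivD(3)[OF assms(1-3)] by (simp add: assms(4))
  then show ?thesis
    using DERIV_const DERIV_unique by blast
qed

lemma has_mat_deriv_const: "C \<in> carrier_mat nr nc \<Longrightarrow> has_mat_deriv nr nc (\<lambda>t. C) (0\<^sub>m nr nc) x"
  unfolding has_mat_deriv_def by auto

lemma has_vec_deriv_const: "v \<in> carrier_vec nr \<Longrightarrow> has_vec_deriv nr (\<lambda>t. v) (0\<^sub>v nr) x"
  unfolding has_vec_deriv_def by auto

lemma has_mat_deriv_diff:
  assumes f: "has_mat_deriv nr nc f F x" and g: "has_mat_deriv nr nc g G x"
  shows "has_mat_deriv nr nc (\<lambda>t. f t - g t) (F - G) x"
proof -
  have "((\<lambda>t. (f t - g t) $$ (a,b)) has_real_derivative (F - G) $$ (a,b)) (at x)"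
    if "a < nr" "b < nc" for a b
    using DERIV_diff[OF has_mat_derivD(3)[OF f that] has_mat_derivD(3)[OF g that]] that
    by (simp add: has_mat_deriv_dim[OF f] has_mat_deriv_dim[OF g])
  then show ?thesis
    using has_mat_derivD(1,2)[OF f] has_mat_derivD(1,2)[OF g] unfolding has_mat_deriv_def by (auto simp: minus_carrier_mat)
qed

lemma has_vec_deriv_add:
  assumes f: "has_vec_deriv nr f F x" and g: "has_vec_deriv nr g G x"
  shows "has_vec_deriv nr (\<lambda>t. f t + g t) (F + G) x"
proof -
  have "((\<lambda>t. (f t + g t) $ a) has_real_derivative (F + G) $ a) (at x)" if "a < nr" for a
    using DERIV_add[OF has_vec_derivD(3)[OF f that] has_vec_derivD(3)[OF g that]] that
    by (simp add: has_vec_deriv_dim[OF f] has_vec_deriv_dim[OF g])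
  then show ?thesis
    using has_vec_derivD(1,2)[OF f] has_vec_derivD(1,2)[OF g] unfolding has_vec_deriv_def by auto
qed

lemma has_vec_deriv_diff:
  assumes f: "has_vec_deriv nr f F x" and g: "has_vec_deriv nr g G x"
  shows "has_vec_deriv nr (\<lambda>t. f t - g t) (F - G) x"
proof -
  have "((\<lambda>t. (f t - g t) $ a) has_real_derivative (F - G) $ a) (at x)" if "a < nr" for a
    using DERIV_diff[OF has_vec_derivD(3)[OF f that] has_vec_derivD(3)[OF g that]] that
    by (simp add: has_vec_deriv_dim[OF f] has_vec_deriv_dim[OF g])
  then show ?thesis
    using has_vec_derivD(1,2)[OF f] has_vec_derivD(1,2)[OF g] unfolding has_vec_deriv_def by auto
qed

lemma has_mat_deriv_transpose:
  assumes f: "has_mat_deriv nr nc f F x"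
  shows "has_mat_deriv nc nr (\<lambda>t. transpose_mat (f t)) (transpose_mat F) x"
proof -
  have "((\<lambda>t. transpose_mat (f t) $$ (a,b)) has_real_derivative transpose_mat F $$ (a,b)) (at x)"
    if "a < nc" "b < nr" for a b
    using has_mat_derivD(3)[OF f that(2,1)] that by (simp add: has_mat_deriv_dim[OF f])
  then show ?thesis
    using has_mat_derivD(1,2)[OF f] unfolding has_mat_deriv_def by auto
qed

lemma has_mat_deriv_mult:
  assumes f: "has_mat_deriv nr k f F x" and g: "has_mat_deriv k nc g G x"
  shows "has_mat_deriv nr nc (\<lambda>t. f t * g t) (F * g x + f x * G) x"
proof -
  note dims = has_mat_deriv_dim[OF f] has_mat_deriv_dim[OF g]
  have "((\<lambda>t. (f t * g t) $$ (a,b)) has_real_derivative (F * g x + f x * G) $$ (a,b)) (at x)"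
    if "a < nr" "b < nc" for a b
  proof -
    have "((\<lambda>t. \<Sum>c = 0..<k. f t $$ (a,c) * g t $$ (c,b)) has_real_derivative
        (\<Sum>c = 0..<k. F $$ (a,c) * g x $$ (c,b) + G $$ (c,b) * f x $$ (a,c))) (at x)"
      using that by (intro DERIV_sum DERIV_mult has_mat_derivD(3)[OF f] has_mat_derivD(3)[OF g]) auto
    then show ?thesis
      using that by (simp add: dims scalar_prod_def sum.distrib mult.commute)
  qed
  then show ?thesis
    unfolding has_mat_deriv_def by (auto simp: dims intro!: carrier_matI)
qed

lemma has_vec_deriv_mult_mat_vec:
  assumes f: "has_mat_deriv nr k f F x" and g: "has_vec_deriv k g G x"
  shows "has_vec_deriv nr (\<lambda>t. f t *\<^sub>v g t) (F *\<^sub>v g x + f x *\<^sub>v G) x"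
proof -
  note dims = has_mat_deriv_dim[OF f] has_vec_deriv_dim[OF g]
  have "((\<lambda>t. (f t *\<^sub>v g t) $ a) has_real_derivative (F *\<^sub>v g x + f x *\<^sub>v G) $ a) (at x)"
    if "a < nr" for a
  proof -
    have "((\<lambda>t. \<Sum>c = 0..<k. f t $$ (a,c) * g t $ c) has_real_derivative
        (\<Sum>c = 0..<k. F $$ (a,c) * g x $ c + G $ c * f x $$ (a,c))) (at x)"
      using that by (intro DERIV_sum DERIV_mult has_mat_derivD(3)[OF f] has_vec_derivD(3)[OF g]) auto
    then show ?thesis
      using that by (simp add: dims scalar_prod_def sum.distrib mult.commute)
  qed
  then show ?thesis
    unfolding has_vec_deriv_def by (auto simp: dims intro!: carrier_vecI)
qed

lemma has_vec_deriv_mult_mat_vec_const: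
  assumes f: "has_mat_deriv nr k f F x" and v: "v \<in> carrier_vec k"
  shows "has_vec_deriv nr (\<lambda>t. f t *\<^sub>v v) (F *\<^sub>v v) x"
proof -
  have "F *\<^sub>v v + f x *\<^sub>v 0\<^sub>v k = F *\<^sub>v v"
    using has_mat_deriv_dim[OF f] v by (intro eq_vecI) (auto simp: scalar_prod_def)
  then show ?thesis
    using has_vec_deriv_mult_mat_vec[OF f has_vec_deriv_const[OF v]] by simp
qed

lemma has_mat_deriv_four_block:
  assumes fa: "has_mat_deriv r1 c1 fa FA x" and fb: "has_mat_deriv r1 c2 fb FB x"
    and fc: "has_mat_deriv r2 c1 fc FC x" and fd: "has_mat_deriv r2 c2 fd FD x"
  shows "has_mat_deriv (r1 + r2) (c1 + c2) (\<lambda>t. four_block_mat (fa t) (fb t) (fc t) (fd t))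
    (four_block_mat FA FB FC FD) x"
proof -
  note dims = has_mat_deriv_dim[OF fa] has_mat_deriv_dim[OF fb] has_mat_deriv_dim[OF fc]
    has_mat_deriv_dim[OF fd]
  have "((\<lambda>t. four_block_mat (fa t) (fb t) (fc t) (fd t) $$ (a,b)) has_real_derivative
      four_block_mat FA FB FC FD $$ (a,b)) (at x)" if "a < r1 + r2" "b < c1 + c2" for a b
    using that has_mat_derivD(3)[OF fa] has_mat_derivD(3)[OF fb] has_mat_derivD(3)[OF fc]
      has_mat_derivD(3)[OF fd]
    by (cases "a < r1"; cases "b < c1") (simp_all add: dims)
  then show ?thesis
    unfolding has_mat_deriv_def by (auto simp: dims intro!: carrier_matI)
qed

lemma has_mat_deriv_dsum:
  assumes fa: "has_mat_deriv r1 c1 fa FA x" and fd: "has_mat_deriv r2 c2 fd FD x"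
  shows "has_mat_deriv (r1 + r2) (c1 + c2) (\<lambda>t. dsum (fa t) (fd t)) (dsum FA FD) x"
  using has_mat_deriv_four_block[OF fa has_mat_deriv_const has_mat_deriv_const fd]
  by (simp add: dsum_def has_mat_deriv_dim[OF fa] has_mat_deriv_dim[OF fd])

lemma has_mat_deriv_hcat:
  assumes f: "has_mat_deriv nr c1 f F x" and g: "has_mat_deriv nr c2 g G x"
  shows "has_mat_deriv nr (c1 + c2) (\<lambda>t. hcat (f t) (g t)) (hcat F G) x"
proof -
  note dims = has_mat_deriv_dim[OF f] has_mat_deriv_dim[OF g]
  have "((\<lambda>t. hcat (f t) (g t) $$ (a,b)) has_real_derivative hcat F G $$ (a,b)) (at x)"
    if "a < nr" "b < c1 + c2" for a b
    using that has_mat_derivD(3)[OF f] has_mat_derivD(3)[OF g]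
    by (cases "b < c1") (simp_all add: hcat_def dims)
  then show ?thesis
    unfolding has_mat_deriv_def by (simp add: hcat_def dims)
qed

lemma deriv0_eq: "(g has_real_derivative D) (at 0) \<Longrightarrow> deriv0 g = D"
  unfolding deriv0_def by (rule some_equality) (auto intro: DERIV_unique)

lemma mat_pd_eq:
  assumes "has_mat_deriv nr nc (\<lambda>t. F (\<theta> + t *\<^sub>R i)) G 0"
  shows "mat_pd i F \<theta> = G"
proof -
  have "F \<theta> \<in> carrier_mat nr nc"
    using has_mat_derivD(1)[OF assms, of 0] by simp
  then show ?thesis
    using assms unfolding has_mat_deriv_def mat_pd_def by (intro eq_matI) (auto simp: deriv0_eq)
qed

lemma vec_pd_eq:
  assumes "has_vec_deriv nr (\<lambda>t. F (\<theta> + t *\<^sub>R i)) G 0"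
  shows "vec_pd i F \<theta> = G"
proof -
  have "F \<theta> \<in> carrier_vec nr"
    using has_vec_derivD(1)[OF assms, of 0] by simp
  then show ?thesis
    using assms unfolding has_vec_deriv_def vec_pd_def by (intro eq_vecI) (auto simp: deriv0_eq)
qed

lemma has_real_derivative_along_line:
  fixes g :: "'a::euclidean_space \<Rightarrow> real"
  assumes "g differentiable (at \<theta>)"
  shows "((\<lambda>t. g (\<theta> + t *\<^sub>R i)) has_real_derivative deriv0 (\<lambda>t. g (\<theta> + t *\<^sub>R i))) (at 0)"
proof -
  have line: "(\<lambda>t. \<theta> + t *\<^sub>R i) differentiable (at (0::real))"
    by (intro differentiable_add differentiable_const differentiable_scaleR differentiable_ident)
  have "(\<lambda>t. g (\<theta> + t *\<^sub>R i)) differentiable (at 0)"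
    using differentiable_compose[of g, OF _ line] assms by simp
  then obtain D where "((\<lambda>t. g (\<theta> + t *\<^sub>R i)) has_real_derivative D) (at 0)"
    unfolding real_differentiable_def by blast
  then show ?thesis
    by (simp add: deriv0_eq)
qed

lemma mat_diff_carrier: "mat_diff nr nc F \<Longrightarrow> F \<theta> \<in> carrier_mat nr nc"
  unfolding mat_diff_def by blast

lemma mat_diff_has_mat_deriv:
  assumes F: "mat_diff nr nc F"
  shows "has_mat_deriv nr nc (\<lambda>t. F (\<theta> + t *\<^sub>R i)) (mat_pd i F \<theta>) 0"
proof -
  have dims: "dim_row (F \<theta>) = nr" "dim_col (F \<theta>) = nc"
    using F unfolding mat_diff_def by auto
  have "((\<lambda>t. F (\<theta> + t *\<^sub>R i) $$ (a,b)) has_real_derivative mat_pd i F \<theta> $$ (a,b)) (at 0)"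
    if "a < nr" "b < nc" for a b
    using has_real_derivative_along_line[of "\<lambda>\<theta>. F \<theta> $$ (a,b)"] F that
    unfolding mat_diff_def mat_pd_def by (simp add: dims)
  then show ?thesis
    using F unfolding mat_diff_def has_mat_deriv_def mat_pd_def by (simp add: dims)
qed

lemma vec_diff_has_vec_deriv:
  assumes v: "vec_diff nr v"
  shows "has_vec_deriv nr (\<lambda>t. v (\<theta> + t *\<^sub>R i)) (vec_pd i v \<theta>) 0"
proof -
  have dims: "dim_vec (v \<theta>) = nr"
    using v unfolding vec_diff_def by auto
  have "((\<lambda>t. v (\<theta> + t *\<^sub>R i) $ a) has_real_derivative vec_pd i v \<theta> $ a) (at 0)"
    if "a < nr" for a
    using has_real_derivative_along_line[of "\<lambda>\<theta>. v \<theta> $ a"] v that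
    unfolding vec_diff_def vec_pd_def by (simp add: dims)
  then show ?thesis
    using v unfolding vec_diff_def has_vec_deriv_def vec_pd_def by (simp add: dims)
qed

lemma has_mat_deriv_mat_pd:
  assumes "has_mat_deriv nr nc (\<lambda>t. F (\<theta> + t *\<^sub>R i)) G 0"
  shows "has_mat_deriv nr nc (\<lambda>t. F (\<theta> + t *\<^sub>R i)) (mat_pd i F \<theta>) 0"
  using assms mat_pd_eq[OF assms] by simp

subsection \<open>Differentiating the inverse\<close>

lemma det_differentiable:
  fixes f :: "real \<Rightarrow> real mat"
  assumes "\<And>t. f t \<in> carrier_mat n n"
    and "\<And>a b. a < n \<Longrightarrow> b < n \<Longrightarrow> (\<lambda>t. f t $$ (a,b)) differentiable (at x)"
  shows "(\<lambda>t. det (f t)) differentiable (at x)"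
proof -
  have "(\<lambda>t. \<Prod>a = 0..<n. f t $$ (a, p a)) differentiable (at x)" if "p permutes {0..<n}" for p
  proof -
    have "\<forall>a\<in>{0..<n}. \<exists>D. ((\<lambda>t. f t $$ (a, p a)) has_derivative D) (at x)"
      using assms(2) permutes_in_image[OF that] unfolding differentiable_def by auto
    from bchoice[OF this] obtain D
      where D: "\<forall>a\<in>{0..<n}. ((\<lambda>t. f t $$ (a, p a)) has_derivative D a) (at x)" ..
    then show ?thesis
      using has_derivative_prod[of "{0..<n}" "\<lambda>a t. f t $$ (a, p a)" D] unfolding differentiable_def
      by blast
  qed
  then show ?thesis
    unfolding det_def'[OF assms(1)]
    by (intro differentiable_sum) (auto intro!: differentiable_mult simp: finite_permutations)
qed

lemma pos_def_mat_det_nonzero: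
  fixes M :: "real mat"
  assumes "pos_def_mat M" "M \<in> carrier_mat n n"
  shows "det M \<noteq> 0"
proof
  assume "det M = 0"
  then obtain v where v: "v \<in> carrier_vec n" "v \<noteq> 0\<^sub>v n" "M *\<^sub>v v = 0\<^sub>v n"
    using det_0_iff_vec_prod_zero[OF assms(2)] by blast
  then have "scalar_prod v (M *\<^sub>v v) > 0"
    using assms unfolding pos_def_mat_def by auto
  then show False
    using v by simp
qed

lemma minv_carrier: "A \<in> carrier_mat n n \<Longrightarrow> minv A \<in> carrier_mat n n"
  unfolding minv_def using mat_inverse(2)[of A n] by (auto split: option.splits)

lemma minv_inverse:
  assumes A: "A \<in> carrier_mat n n" and "det A \<noteq> 0"
  shows "A * minv A = 1\<^sub>m n" "minv A * A = 1\<^sub>m n"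
proof -
  have "A \<in> Units (ring_mat TYPE(real) n ())"
    by (rule det_non_zero_imp_unit[OF assms])
  then obtain B where B: "mat_inverse A = Some B"
    using mat_inverse(1)[OF A, of "()"] by (cases "mat_inverse A") auto
  then show "A * minv A = 1\<^sub>m n" "minv A * A = 1\<^sub>m n"
    using mat_inverse(2)[OF A B] unfolding minv_def by auto
qed

lemma minv_eq_adj:
  assumes A: "A \<in> carrier_mat n n" and d: "det A \<noteq> 0"
  shows "minv A = (1 / det A) \<cdot>\<^sub>m adj_mat A"
proof -
  have "(1 / det A) \<cdot>\<^sub>m (det A \<cdot>\<^sub>m 1\<^sub>m n) = 1\<^sub>m n"
    using d by (intro eq_matI) auto
  then have adj: "(1 / det A) \<cdot>\<^sub>m adj_mat A * A = 1\<^sub>m n"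
    using adj_mat[OF A] by (simp add: mult_smult_assoc_mat[OF adj_mat(1)[OF A] A])
  have "minv A = ((1 / det A) \<cdot>\<^sub>m adj_mat A * A) * minv A"
    using minv_carrier[OF A] by (simp add: adj)
  also have "\<dots> = (1 / det A) \<cdot>\<^sub>m adj_mat A * (A * minv A)"
    using adj_mat(1)[OF A] A minv_carrier[OF A] by (intro assoc_mult_mat) auto
  also have "\<dots> = (1 / det A) \<cdot>\<^sub>m adj_mat A"
    using minv_inverse[OF A d] adj_mat(1)[OF A] by simp
  finally show ?thesis .
qed

lemma minv_entry_differentiable:
  fixes f :: "real \<Rightarrow> real mat"
  assumes f: "\<And>t. f t \<in> carrier_mat n n" and inv: "\<And>t. det (f t) \<noteq> 0"
    and d: "\<And>a b. a < n \<Longrightarrow> b < n \<Longrightarrow> (\<lambda>t. f t $$ (a,b)) differentiable (at x)"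
    and ab: "a < n" "b < n"
  shows "(\<lambda>t. minv (f t) $$ (a,b)) differentiable (at x)"
proof -
  have cofactor: "minv (f t) $$ (a,b) = (-1)^(b+a) * det (mat_delete (f t) b a) / det (f t)" for t
    using minv_eq_adj[OF f inv] carrier_matD[OF f] ab by (simp add: adj_mat_def cofactor_def)
  have "(\<lambda>t. det (mat_delete (f t) b a)) differentiable (at x)"
  proof (rule det_differentiable)
    show "mat_delete (f t) b a \<in> carrier_mat (n-1) (n-1)" for t
      using f by (rule mat_delete_carrier)
    show "(\<lambda>t. mat_delete (f t) b a $$ (c,e)) differentiable (at x)" if "c < n - 1" "e < n - 1" for c e
    proof -
      have "(if c < b then c else Suc c) < n" "(if e < a then e else Suc e) < n"
        using that by auto
      from d[OF this] show ?thesis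
        using that by (simp add: mat_delete_def carrier_matD[OF f] split del: if_split)
    qed
  qed
  then show ?thesis
    unfolding cofactor using d f inv by (intro differentiable_divide det_differentiable) auto
qed

lemma has_mat_deriv_minv:
  assumes f: "has_mat_deriv n n f F x" and inv: "\<And>t. det (f t) \<noteq> 0"
  shows "has_mat_deriv n n (\<lambda>t. minv (f t)) (- (minv (f x) * F * minv (f x))) x"
proof -
  note cf = has_mat_derivD(1,2)[OF f]
  have d: "(\<lambda>t. f t $$ (a,b)) differentiable (at x)" if "a < n" "b < n" for a b
    using has_mat_derivD(3)[OF f that] real_differentiable_def by blast
  obtain G where G: "has_mat_deriv n n (\<lambda>t. minv (f t)) G x"
  proof (rule has_mat_deriv_exists)
    show "minv (f t) \<in> carrier_mat n n" for t
      by (rule minv_carrier[OF cf(1)])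
    show "(\<lambda>t. minv (f t) $$ (a,b)) differentiable (at x)" if "a < n" "b < n" for a b
      by (rule minv_entry_differentiable[OF cf(1) inv d that])
  qed
  note cG = has_mat_derivD(2)[OF G] and ci = minv_carrier[OF cf(1)[of x]]
  have "has_mat_deriv n n (\<lambda>t. f t * minv (f t)) (0\<^sub>m n n) x"
    using has_mat_deriv_const[of "1\<^sub>m n" n n] minv_inverse(1)[OF cf(1) inv] by simp
  then have zero: "F * minv (f x) + f x * G = 0\<^sub>m n n"
    using has_mat_deriv_unique has_mat_deriv_mult[OF f G] by blast
  have fG: "f x * G = - (F * minv (f x))"
  proof (rule eq_matI)
    fix a b assume "a < dim_row (- (F * minv (f x)))" "b < dim_col (- (F * minv (f x)))"
    then have ab: "a < n" "b < n"
      using cf(2) ci by auto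
    have "(F * minv (f x) + f x * G) $$ (a,b) = 0"
      using zero ab by simp
    then show "(f x * G) $$ (a,b) = (- (F * minv (f x))) $$ (a,b)"
      using ab cf(1)[of x] cf(2) ci cG by simp
  qed (use cf(1)[of x] cf(2) ci cG in auto)
  have "G = (minv (f x) * f x) * G"
    using minv_inverse(2)[OF cf(1) inv] cG by simp
  also have "\<dots> = minv (f x) * - (F * minv (f x))"
    using ci cf(1)[of x] cG by (simp add: fG)
  also have "\<dots> = - (minv (f x) * F * minv (f x))"
    using ci cf(2) by simp
  finally show ?thesis
    using G by simp
qed

definition strictly_upper_triangular :: "'a::zero mat \<Rightarrow> bool" where
  "strictly_upper_triangular A \<longleftrightarrow> (\<forall>i<dim_row A. \<forall>j<dim_col A. j \<le> i \<longrightarrow> A $$ (i,j) = 0)"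

lemma det_unit_upper_triangular:
  assumes "unit_upper_triangular R" "R \<in> carrier_mat n n"
  shows "det R = 1"
  using assms det_upper_triangular[of R n]
  unfolding unit_upper_triangular_def by (simp add: prod_list_diag_prod)

lemma det_diagonal_mat_nonzero:
  fixes D :: "real mat"
  assumes "diagonal_mat D" "D \<in> carrier_mat n n" "\<And>j. j < n \<Longrightarrow> D $$ (j,j) \<noteq> 0"
  shows "det D \<noteq> 0"
proof -
  have "upper_triangular D"
    using assms(1,2) unfolding diagonal_mat_def upper_triangular_def by auto
  then show ?thesis
    using assms det_upper_triangular[of D n] by (simp add: prod_list_diag_prod)
qed

lemma mult_mat_entry_eq_0:
  assumes "A \<in> carrier_mat nr n" "B \<in> carrier_mat n nc" "i < nr" "j < nc"
    and "\<And>k. k < n \<Longrightarrow> A $$ (i,k) * B $$ (k,j) = (0::'a::comm_semiring_0)"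
  shows "(A * B) $$ (i,j) = 0"
  using assms by (auto simp: scalar_prod_def intro!: sum.neutral)

lemma upper_triangular_minv:
  assumes u: "unit_upper_triangular R" and R: "R \<in> carrier_mat n n"
  shows "upper_triangular (minv R)"
proof -
  have inv: "minv R * R = 1\<^sub>m n"
    using minv_inverse(2)[OF R] det_unit_upper_triangular[OF u R] by simp
  have R_entry: "R $$ (k,j) = 0" "R $$ (j,j) = 1" if "j < k" "k < n" for j k
    using u R that unfolding unit_upper_triangular_def upper_triangular_def by auto
  have "minv R $$ (i,j) = 0" if "j < i" "i < n" for i j
    using that
  proof (induction j arbitrary: i rule: less_induct)
    case (less j)
    have zero: "minv R $$ (i,k) * R $$ (k,j) = 0" if "k \<in> {0..<n} - {j}" for k
    proof (cases "k < j")
      case True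
      then show ?thesis using less by simp
    next
      case False
      then show ?thesis using that R_entry(1)[of j k] by simp
    qed
    have "0 = (minv R * R) $$ (i,j)"
      using inv less.prems by simp
    also have "\<dots> = (\<Sum>k = 0..<n. minv R $$ (i,k) * R $$ (k,j))"
      using minv_carrier[OF R] R less.prems by (simp add: scalar_prod_def)
    also have "\<dots> = minv R $$ (i,j) * R $$ (j,j)"
      using less.prems zero by (simp add: sum.remove[of "{0..<n}" j] sum.neutral)
    also have "\<dots> = minv R $$ (i,j)"
      using R_entry(2)[of j i] less.prems by simp
    finally show ?case by simp
  qed
  then show ?thesis
    using minv_carrier[OF R] by auto
qed

lemma unit_upper_triangular_four_block_lower_right:
  fixes A B D :: "real mat"
  assumes u: "unit_upper_triangular (four_block_mat A B (0\<^sub>m m n) D)"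
    and c: "A \<in> carrier_mat n n" "B \<in> carrier_mat n m" "D \<in> carrier_mat m m"
  shows "unit_upper_triangular D"
proof -
  let ?M = "four_block_mat A B (0\<^sub>m m n) D"
  have "D $$ (i,j) = 0" if "i < m" "j < i" for i j
  proof -
    have "?M $$ (n + i, n + j) = 0"
      using u c that unfolding unit_upper_triangular_def by (intro upper_triangularD) auto
    then show ?thesis
      using c that by simp
  qed
  moreover have "D $$ (i,i) = 1" if "i < m" for i
  proof -
    have "n + i < dim_row ?M"
      using c that by simp
    then have "?M $$ (n + i, n + i) = 1"
      using u unfolding unit_upper_triangular_def by blast
    then show ?thesis
      using c that by simp
  qed
  ultimately show ?thesis
    using c unfolding unit_upper_triangular_def upper_triangular_def by auto
qed

lemma strictly_upper_triangular_mult_left: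
  fixes U V :: "real mat"
  assumes "upper_triangular U" "strictly_upper_triangular V"
    and "U \<in> carrier_mat n n" "V \<in> carrier_mat n n"
  shows "strictly_upper_triangular (U * V)"
  unfolding strictly_upper_triangular_def
proof (intro allI impI)
  fix i j assume ij: "i < dim_row (U * V)" "j < dim_col (U * V)" "j \<le> i"
  show "(U * V) $$ (i,j) = 0"
  proof (rule mult_mat_entry_eq_0[OF assms(3,4)])
    show "U $$ (i,k) * V $$ (k,j) = 0" if "k < n" for k
      using assms ij that unfolding strictly_upper_triangular_def
      by (cases "k < i") auto
  qed (use ij assms in auto)
qed

lemma strictly_upper_triangular_mult_diagonal:
  fixes V D :: "real mat"
  assumes "strictly_upper_triangular V" "diagonal_mat D"
    and "V \<in> carrier_mat n n" "D \<in> carrier_mat n n"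
  shows "strictly_upper_triangular (V * D)"
  unfolding strictly_upper_triangular_def
proof (intro allI impI)
  fix i j assume ij: "i < dim_row (V * D)" "j < dim_col (V * D)" "j \<le> i"
  show "(V * D) $$ (i,j) = 0"
  proof (rule mult_mat_entry_eq_0[OF assms(3,4)])
    show "V $$ (i,k) * D $$ (k,j) = 0" if "k < n" for k
      using assms ij that unfolding strictly_upper_triangular_def diagonal_mat_def
      by (cases "k = j") auto
  qed (use ij assms in auto)
qed

lemma has_mat_deriv_unit_upper_triangular:
  assumes R: "has_mat_deriv n n R dR x" and u: "\<And>t. unit_upper_triangular (R t)"
  shows "strictly_upper_triangular dR"
  unfolding strictly_upper_triangular_def
proof (intro allI impI)
  fix a b assume ab: "a < dim_row dR" "b < dim_col dR" "b \<le> a"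
  have "R t $$ (a,b) = (if a = b then 1 else 0)" for t
    using u[of t] ab has_mat_deriv_dim[OF R]
    unfolding unit_upper_triangular_def upper_triangular_def by auto
  then show "dR $$ (a,b) = 0"
    using has_mat_deriv_entry_const[OF R] ab has_mat_deriv_dim[OF R] by simp
qed

lemma has_mat_deriv_diagonal:
  assumes D: "has_mat_deriv n n D dD x" and d: "\<And>t. diagonal_mat (D t)"
  shows "diagonal_mat dD"
  unfolding diagonal_mat_def
proof (intro allI impI)
  fix a b assume ab: "a < dim_row dD" "b < dim_col dD" "a \<noteq> b"
  have "D t $$ (a,b) = 0" for t
    using d[of t] ab has_mat_deriv_dim[OF D] unfolding diagonal_mat_def by auto
  then show "dD $$ (a,b) = 0"
    using has_mat_deriv_entry_const[OF D] ab has_mat_deriv_dim[OF D] by simp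
qed

lemma strictly_upper_diagonal_split:
  fixes M0 M2 X D :: "real mat"
  assumes eq: "transpose_mat M0 + M2 + M0 = X + D + transpose_mat X"
    and X: "strictly_upper_triangular X" and D: "diagonal_mat D"
    and carrier: "M0 \<in> carrier_mat s s" "M2 \<in> carrier_mat s s" "X \<in> carrier_mat s s"
      "D \<in> carrier_mat s s"
  shows "X = transpose_mat (strict_lower M0) + strict_upper M0 + strict_upper M2"
    and "D = 2 \<cdot>\<^sub>m diag_part M0 + diag_part M2"
proof -
  have entry: "M0 $$ (j,i) + M2 $$ (i,j) + M0 $$ (i,j) = X $$ (i,j) + D $$ (i,j) + X $$ (j,i)"
    if "i < s" "j < s" for i j
    using arg_cong[OF eq, of "\<lambda>M. M $$ (i,j)"] that carrier by simp
  have X0: "X $$ (i,j) = 0" if "j \<le> i" "i < s" "j < s" for i j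
    using X that carrier unfolding strictly_upper_triangular_def by auto
  have D0: "D $$ (i,j) = 0" if "i \<noteq> j" "i < s" "j < s" for i j
    using D that carrier unfolding diagonal_mat_def by auto
  show "X = transpose_mat (strict_lower M0) + strict_upper M0 + strict_upper M2"
  proof (rule eq_matI)
    fix i j assume "i < dim_row (transpose_mat (strict_lower M0) + strict_upper M0 + strict_upper M2)"
      "j < dim_col (transpose_mat (strict_lower M0) + strict_upper M0 + strict_upper M2)"
    then have ij: "i < s" "j < s"
      using carrier by (auto simp: strict_lower_def strict_upper_def)
    show "X $$ (i,j) = (transpose_mat (strict_lower M0) + strict_upper M0 + strict_upper M2) $$ (i,j)"
    proof (cases "i < j")
      case True
      have "X $$ (j,i) = 0"
        using X0 True ij by simp
      with True show ?thesis
        using entry[OF ij] D0[of i j] ij carrier by (simp add: strict_lower_def strict_upper_def)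
    next
      case False
      have "X $$ (i,j) = 0"
        using X0 False ij by simp
      with False show ?thesis
        using ij carrier by (simp add: strict_lower_def strict_upper_def)
    qed
  qed (use carrier in \<open>auto simp: strict_lower_def strict_upper_def\<close>)
  show "D = 2 \<cdot>\<^sub>m diag_part M0 + diag_part M2"
  proof (rule eq_matI)
    fix i j assume "i < dim_row (2 \<cdot>\<^sub>m diag_part M0 + diag_part M2)"
      "j < dim_col (2 \<cdot>\<^sub>m diag_part M0 + diag_part M2)"
    then have ij: "i < s" "j < s"
      using carrier by (auto simp: diag_part_def)
    show "D $$ (i,j) = (2 \<cdot>\<^sub>m diag_part M0 + diag_part M2) $$ (i,j)"
      using entry[OF ij] X0[of i i] D0[of i j] ij carrier by (auto simp: diag_part_def)
  qed (use carrier in \<open>auto simp: diag_part_def\<close>)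
qed

subsection \<open>Correctness of the differentiated UD scheme\<close>

lemma assoc_mult_mat_dim:
  fixes A B C :: "'a::comm_ring mat"
  shows "dim_col A = dim_row B \<Longrightarrow> dim_col B = dim_row C \<Longrightarrow> A * B * C = A * (B * C)"
  by (rule assoc_mult_mat[of A "dim_row A" "dim_col A" B "dim_col B" C "dim_col C"]) auto

lemma add_mult_distrib_mat_dim:
  fixes A B C :: "'a::comm_ring mat"
  shows "dim_row A = dim_row B \<Longrightarrow> dim_col A = dim_col B \<Longrightarrow> dim_col B = dim_row C \<Longrightarrow>
    (A + B) * C = A * C + B * C"
  by (rule add_mult_distrib_mat[of A "dim_row A" "dim_col A" B C "dim_col C"]) auto

lemma mult_add_distrib_mat_dim:
  fixes A B C :: "'a::comm_ring mat"
  shows "dim_row B = dim_row C \<Longrightarrow> dim_col B = dim_col C \<Longrightarrow> dim_col A = dim_row B \<Longrightarrow>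
    A * (B + C) = A * B + A * C"
  by (rule mult_add_distrib_mat[of A "dim_row A" "dim_col A" B "dim_col B" C]) auto

lemma transpose_mult_dim:
  fixes A B :: "'a::comm_ring mat"
  shows "dim_col A = dim_row B \<Longrightarrow> transpose_mat (A * B) = transpose_mat B * transpose_mat A"
  by (rule transpose_mult[of A "dim_row A" "dim_col A" B "dim_col B"]) auto

lemma transpose_add_dim:
  fixes A B :: "'a::comm_ring mat"
  shows "dim_row A = dim_row B \<Longrightarrow> dim_col A = dim_col B \<Longrightarrow>
    transpose_mat (A + B) = transpose_mat A + transpose_mat B"
  by (rule transpose_add[of A "dim_row A" "dim_col A" B]) auto

lemmas mat_dim_simps = assoc_mult_mat_dim add_mult_distrib_mat_dim mult_add_distrib_mat_dim
  transpose_mult_dim transpose_add_dim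

lemma mult_cancel_left_inverse:
  fixes L R M :: "'a::comm_ring_1 mat"
  assumes LR: "L * R = 1\<^sub>m n" and dims: "dim_col L = dim_row R" "dim_col R = dim_row M"
  shows "L * (R * M) = M"
proof -
  have "dim_row M = n"
    using arg_cong[OF LR, of dim_col] dims by simp
  moreover have "L * (R * M) = L * R * M"
    using dims by (simp add: assoc_mult_mat_dim)
  ultimately show ?thesis
    unfolding LR by simp
qed

lemma transpose_diagonal_mat:
  assumes "diagonal_mat D" "D \<in> carrier_mat n n"
  shows "transpose_mat D = D"
  using assms unfolding diagonal_mat_def by (intro eq_matI) (auto, metis)

lemma mwgs_gram:
  assumes "mwgs A DA W R DR"
  shows "transpose_mat A * DA * A = R * DR * transpose_mat R"
proof -
  obtain r s where c: "A \<in> carrier_mat r s" "DA \<in> carrier_mat r r" "W \<in> carrier_mat r s"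
    "R \<in> carrier_mat s s" and At: "transpose_mat A = R * transpose_mat W"
    and DR: "transpose_mat W * DA * W = DR"
    using assms unfolding mwgs_def Let_def by (auto intro: carrier_matI)
  have "A = W * transpose_mat R"
    using arg_cong[OF At, of transpose_mat] c by (simp add: transpose_mult_dim)
  then show ?thesis
    unfolding At[symmetric] using c by (simp add: mat_dim_simps flip: DR)
qed

lemma mwgs_deriv_identity:
  assumes mw: "\<And>t. mwgs (A t) (DA t) (W t) (R t) (DR t)"
    and A: "has_mat_deriv r s A dA x" and DA: "has_mat_deriv r r DA dDA x"
    and R: "has_mat_deriv s s R dR x" and DR: "has_mat_deriv s s DR dDR x"
  shows "transpose_mat (diffUD_M0 (W x) (R x) (DA x) dA) + diffUD_M2 (W x) dDA
      + diffUD_M0 (W x) (R x) (DA x) dA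
    = minv (R x) * dR * DR x + dDR + transpose_mat (minv (R x) * dR * DR x)"
proof -
  have mwx: "diagonal_mat (DA x)" "W x \<in> carrier_mat r s" "unit_upper_triangular (R x)"
    "diagonal_mat (DR x)" "transpose_mat (A x) = R x * transpose_mat (W x)"
    using mw[of x] has_mat_deriv_dim(1,2)[OF A, of x] unfolding mwgs_def Let_def by auto
  let ?Ri = "minv (R x)"
  have "det (R x) \<noteq> 0"
    using det_unit_upper_triangular[OF mwx(3) has_mat_derivD(1)[OF R]] by simp
  then have Ri: "R x * ?Ri = 1\<^sub>m s" "?Ri * R x = 1\<^sub>m s" "?Ri \<in> carrier_mat s s"
    using minv_inverse minv_carrier has_mat_derivD(1)[OF R] by auto
  have RiT: "transpose_mat (R x) * transpose_mat ?Ri = 1\<^sub>m s"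
    using Ri has_mat_derivD(1)[OF R, of x] by (metis transpose_mult transpose_one)
  have sym: "transpose_mat (DA x) = DA x" "transpose_mat (DR x) = DR x"
    using mwx transpose_diagonal_mat has_mat_derivD(1)[OF DA] has_mat_derivD(1)[OF DR] by blast+
  have Ax: "A x = W x * transpose_mat (R x)"
    using arg_cong[OF mwx(5), of transpose_mat] mwx(2) has_mat_derivD(1)[OF R, of x]
    by (simp add: transpose_mult_dim)
  note dims = has_mat_deriv_dim[OF A] has_mat_deriv_dim[OF DA] has_mat_deriv_dim[OF R]
    has_mat_deriv_dim[OF DR] carrier_matD[OF mwx(2)] carrier_matD[OF Ri(3)]
  have cancel: "?Ri * (R x * M) = M" "R x * (?Ri * M) = M" if "dim_row M = s" for M
    using mult_cancel_left_inverse[OF Ri(2)] mult_cancel_left_inverse[OF Ri(1)] that dims by auto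
  have "has_mat_deriv s s (\<lambda>t. transpose_mat (A t) * DA t * A t)
      ((transpose_mat dA * DA x + transpose_mat (A x) * dDA) * A x + transpose_mat (A x) * DA x * dA) x"
    using has_mat_deriv_mult[OF has_mat_deriv_mult[OF has_mat_deriv_transpose[OF A] DA] A] by simp
  moreover have "has_mat_deriv s s (\<lambda>t. transpose_mat (A t) * DA t * A t)
      ((dR * DR x + R x * dDR) * transpose_mat (R x) + R x * DR x * transpose_mat dR) x"
    using has_mat_deriv_mult[OF has_mat_deriv_mult[OF R DR] has_mat_deriv_transpose[OF R]]
    by (simp add: mwgs_gram[OF mw])
  ultimately have "(transpose_mat dA * DA x + transpose_mat (A x) * dDA) * A x
      + transpose_mat (A x) * DA x * dA
    = (dR * DR x + R x * dDR) * transpose_mat (R x) + R x * DR x * transpose_mat dR"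
    by (rule has_mat_deriv_unique)
  then have "?Ri * ((transpose_mat dA * DA x + transpose_mat (A x) * dDA) * A x
      + transpose_mat (A x) * DA x * dA) * transpose_mat ?Ri
    = ?Ri * ((dR * DR x + R x * dDR) * transpose_mat (R x) + R x * DR x * transpose_mat dR)
      * transpose_mat ?Ri"
    by simp
  then show ?thesis
    unfolding diffUD_M0_def diffUD_M2_def mwx(5) Ax
    by (simp add: dims mat_dim_simps sym RiT cancel)
qed

theorem diffUD_correct:
  assumes mw: "\<And>t. mwgs (A t) (DA t) (W t) (R t) (DR t)"
    and A: "has_mat_deriv r s A dA x" and DA: "has_mat_deriv r r DA dDA x"
    and R: "has_mat_deriv s s R dR x" and DR: "has_mat_deriv s s DR dDR x"
  shows "dR = diffUD_R (W x) (R x) (DR x) (DA x) dA dDA"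
    and "dDR = diffUD_D (W x) (R x) (DA x) dA dDA"
proof -
  have mwx: "W x \<in> carrier_mat r s" "DA x \<in> carrier_mat r r" "unit_upper_triangular (R x)"
    "diagonal_mat (DR x)" "\<forall>j<s. DR x $$ (j,j) \<noteq> 0"
    using mw[of x] has_mat_deriv_dim(1,2)[OF A, of x] unfolding mwgs_def Let_def by auto
  note cR = has_mat_derivD(1,2)[OF R] and cDR = has_mat_derivD(1,2)[OF DR]
  define M0 where "M0 = diffUD_M0 (W x) (R x) (DA x) dA"
  define M2 where "M2 = diffUD_M2 (W x) dDA"
  define X where "X = minv (R x) * dR * DR x"
  have "det (R x) \<noteq> 0"
    using det_unit_upper_triangular[OF mwx(3) cR(1)] by simp
  then have Ri: "R x * minv (R x) = 1\<^sub>m s" "minv (R x) \<in> carrier_mat s s"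
    using minv_inverse(1)[OF cR(1)] minv_carrier cR by auto
  have "det (DR x) \<noteq> 0"
    using det_diagonal_mat_nonzero[OF mwx(4) cDR(1)] mwx(5) by blast
  then have DRi: "DR x * minv (DR x) = 1\<^sub>m s" "minv (DR x) \<in> carrier_mat s s"
    using minv_inverse(1)[OF cDR(1)] minv_carrier cDR by auto
  have triangular: "\<And>t. unit_upper_triangular (R t)" "\<And>t. diagonal_mat (DR t)"
    using mw unfolding mwgs_def Let_def by auto
  have "strictly_upper_triangular (minv (R x) * dR)"
    by (rule strictly_upper_triangular_mult_left[OF upper_triangular_minv[OF mwx(3) cR(1)]
          has_mat_deriv_unit_upper_triangular[OF R triangular(1)] Ri(2) cR(2)])
  then have "strictly_upper_triangular X"
    unfolding X_def
    by (rule strictly_upper_triangular_mult_diagonal[OF _ mwx(4) mult_carrier_mat[OF Ri(2) cR(2)] cDR(1)])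
  moreover have "diagonal_mat dDR"
    by (rule has_mat_deriv_diagonal[OF DR triangular(2)])
  moreover have "M0 \<in> carrier_mat s s" "M2 \<in> carrier_mat s s" "X \<in> carrier_mat s s"
    using mwx(1) Ri(2) cR(2) cDR(1)[of x] has_mat_deriv_dim[OF A] has_mat_deriv_dim[OF DA]
    unfolding M0_def M2_def X_def diffUD_M0_def diffUD_M2_def by (auto simp: carrier_matD)
  ultimately have split: "X = transpose_mat (strict_lower M0) + strict_upper M0 + strict_upper M2"
    "dDR = 2 \<cdot>\<^sub>m diag_part M0 + diag_part M2"
    using strictly_upper_diagonal_split[OF mwgs_deriv_identity[OF mw A DA R DR, folded M0_def M2_def X_def]]
      cDR(2) by auto
  have "diffUD_R (W x) (R x) (DR x) (DA x) dA dDA = R x * X * minv (DR x)"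
    unfolding diffUD_R_def Let_def M0_def[symmetric] M2_def[symmetric] split(1) ..
  also have "\<dots> = dR"
    unfolding X_def using carrier_matD[OF Ri(2)] carrier_matD[OF DRi(2)] carrier_matD[OF cR(1)[of x]]
      carrier_matD[OF cR(2)] carrier_matD[OF cDR(1)[of x]]
    by (simp add: mat_dim_simps mult_cancel_left_inverse[OF Ri(1)] DRi(1))
  finally show "dR = diffUD_R (W x) (R x) (DR x) (DA x) dA dDA" ..
  show "dDR = diffUD_D (W x) (R x) (DA x) dA dDA"
    unfolding diffUD_D_def Let_def M0_def[symmetric] M2_def[symmetric] split(2) ..
qed

subsection \<open>Sensitivities of the UD-based Kalman filter\<close>

lemma blk_four_block_mat:
  assumes "A \<in> carrier_mat n1 m1" "B \<in> carrier_mat n1 m2" "C \<in> carrier_mat n2 m1"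
    "D \<in> carrier_mat n2 m2"
  shows "blk (four_block_mat A B C D) 0 0 n1 m1 = A" "blk (four_block_mat A B C D) 0 m1 n1 m2 = B"
    "blk (four_block_mat A B C D) n1 m1 n2 m2 = D"
  using assms by (auto intro!: eq_matI simp: blk_def)

lemma blk_dsum:
  assumes "A \<in> carrier_mat n1 m1" "D \<in> carrier_mat n2 m2"
  shows "blk (dsum A D) 0 0 n1 m1 = A" "blk (dsum A D) n1 m1 n2 m2 = D"
  using assms unfolding dsum_def by (auto intro!: eq_matI simp: blk_def)

text \<open>The hypotheses of \<open>proposition2\<close> for one direction \<open>i\<close> and one parameter value
  \<open>\<theta>\<close>; the outputs of Algorithm 1b then become sequences indexed by \<open>k\<close> alone.\<close>

locale ud_filter_sensitivity =
  fixes n m r N :: nat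
    and T B Z \<beta> S H :: "'a::euclidean_space \<Rightarrow> real mat"
    and \<alpha>0 :: "'a \<Rightarrow> real vec"
    and x y :: "nat \<Rightarrow> real vec"
    and U\<Pi> D\<Pi> UH DH UQ DQ Tb Bb :: "'a \<Rightarrow> real mat"
    and ap af e eb :: "'a \<Rightarrow> nat \<Rightarrow> real vec"
    and UPp DPp UPf DPf URe DRe Ku Wt Wm :: "'a \<Rightarrow> nat \<Rightarrow> real mat"
    and i \<theta> :: 'a
    and dap daf deb :: "nat \<Rightarrow> real vec"
    and dUPp dDPp dUPf dDPf dURe dDRe dKu :: "nat \<Rightarrow> real mat"
  assumes Tb_def: "Tb = (\<lambda>\<theta>. T \<theta> - S \<theta> * minv (H \<theta>) * Z \<theta>)"
    and Bb_def: "Bb = (\<lambda>\<theta>. B \<theta> - S \<theta> * minv (H \<theta>) * \<beta> \<theta>)"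
    and model_diff: "mat_diff n n T" "mat_diff n r B" "mat_diff m n Z" "mat_diff m r \<beta>"
      "mat_diff n m S" "mat_diff m m H"
    and alpha0_diff: "vec_diff n \<alpha>0"
    and data: "\<And>k. x k \<in> carrier_vec r" "\<And>k. y k \<in> carrier_vec m"
    and H_pd: "\<And>\<theta>. pos_def_mat (H \<theta>)"
    and fact_diff: "mat_diff n n U\<Pi>" "mat_diff n n D\<Pi>" "mat_diff m m UH" "mat_diff m m DH"
      "mat_diff n n UQ" "mat_diff n n DQ"
    and A_init: "\<And>\<theta>. af \<theta> 0 = \<alpha>0 \<theta>" "\<And>\<theta>. UPf \<theta> 0 = U\<Pi> \<theta>" "\<And>\<theta>. DPf \<theta> 0 = D\<Pi> \<theta>"
    and A_pred: "\<And>\<theta> k. 1 \<le> k \<Longrightarrow> k \<le> N \<Longrightarrow>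
       ap \<theta> k = Tb \<theta> *\<^sub>v af \<theta> (k-1) + Bb \<theta> *\<^sub>v x (k-1) + (S \<theta> * minv (H \<theta>)) *\<^sub>v y (k-1)"
    and A_time: "\<And>\<theta> k. 1 \<le> k \<Longrightarrow> k \<le> N \<Longrightarrow>
       mwgs (transpose_mat (hcat (Tb \<theta> * UPf \<theta> (k-1)) (UQ \<theta>))) (dsum (DPf \<theta> (k-1)) (DQ \<theta>))
            (Wt \<theta> k) (UPp \<theta> k) (DPp \<theta> k)"
    and A_meas: "\<And>\<theta> k. 1 \<le> k \<Longrightarrow> k \<le> N \<Longrightarrow>
       mwgs (transpose_mat (four_block_mat (UPp \<theta> k) (0\<^sub>m n m) (Z \<theta> * UPp \<theta> k) (UH \<theta>)))
            (dsum (DPp \<theta> k) (DH \<theta>))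
            (Wm \<theta> k) (four_block_mat (UPf \<theta> k) (Ku \<theta> k) (0\<^sub>m m n) (URe \<theta> k))
            (dsum (DPf \<theta> k) (DRe \<theta> k))"
    and A_innov: "\<And>\<theta> k. 1 \<le> k \<Longrightarrow> k \<le> N \<Longrightarrow> e \<theta> k = y k - Z \<theta> *\<^sub>v ap \<theta> k - \<beta> \<theta> *\<^sub>v x k"
    and A_ebar: "\<And>\<theta> k. 1 \<le> k \<Longrightarrow> k \<le> N \<Longrightarrow> eb \<theta> k = minv (URe \<theta> k) *\<^sub>v e \<theta> k"
    and A_filt: "\<And>\<theta> k. 1 \<le> k \<Longrightarrow> k \<le> N \<Longrightarrow> af \<theta> k = ap \<theta> k + Ku \<theta> k *\<^sub>v eb \<theta> k"
    and A_diff: "\<And>k. k \<le> N \<Longrightarrow>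
       mat_diff n n (\<lambda>\<theta>. UPp \<theta> k) \<and> mat_diff n n (\<lambda>\<theta>. DPp \<theta> k)
       \<and> mat_diff n n (\<lambda>\<theta>. UPf \<theta> k) \<and> mat_diff n n (\<lambda>\<theta>. DPf \<theta> k)
       \<and> mat_diff m m (\<lambda>\<theta>. URe \<theta> k) \<and> mat_diff m m (\<lambda>\<theta>. DRe \<theta> k)
       \<and> mat_diff n m (\<lambda>\<theta>. Ku \<theta> k)"
    and B_init: "dUPf 0 = mat_pd i U\<Pi> \<theta>" "dDPf 0 = mat_pd i D\<Pi> \<theta>" "daf 0 = vec_pd i \<alpha>0 \<theta>"
    and B_pred: "\<And>k. 1 \<le> k \<Longrightarrow> k \<le> N \<Longrightarrow>
       dap k = mat_pd i Tb \<theta> *\<^sub>v af \<theta> (k-1) + Tb \<theta> *\<^sub>v daf (k-1)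
         + mat_pd i Bb \<theta> *\<^sub>v x (k-1) + (mat_pd i S \<theta> * minv (H \<theta>)) *\<^sub>v y (k-1)
         - (S \<theta> * minv (H \<theta>) * mat_pd i H \<theta> * minv (H \<theta>)) *\<^sub>v y (k-1)"
    and B_time: "\<And>k. 1 \<le> k \<Longrightarrow> k \<le> N \<Longrightarrow>
       (let DA = dsum (DPf \<theta> (k-1)) (DQ \<theta>);
            dA = transpose_mat (hcat (mat_pd i Tb \<theta> * UPf \<theta> (k-1) + Tb \<theta> * dUPf (k-1))
                                     (mat_pd i UQ \<theta>));
            dDA = dsum (dDPf (k-1)) (mat_pd i DQ \<theta>)
        in dUPp k = diffUD_R (Wt \<theta> k) (UPp \<theta> k) (DPp \<theta> k) DA dA dDA
         \<and> dDPp k = diffUD_D (Wt \<theta> k) (UPp \<theta> k) DA dA dDA)"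
    and B_meas: "\<And>k. 1 \<le> k \<Longrightarrow> k \<le> N \<Longrightarrow>
       (let DA = dsum (DPp \<theta> k) (DH \<theta>);
            dA = transpose_mat (four_block_mat (dUPp k) (0\<^sub>m n m)
                    (mat_pd i Z \<theta> * UPp \<theta> k + Z \<theta> * dUPp k) (mat_pd i UH \<theta>));
            dDA = dsum (dDPp k) (mat_pd i DH \<theta>);
            R = four_block_mat (UPf \<theta> k) (Ku \<theta> k) (0\<^sub>m m n) (URe \<theta> k);
            DR = dsum (DPf \<theta> k) (DRe \<theta> k);
            dR = diffUD_R (Wm \<theta> k) R DR DA dA dDA;
            dDR = diffUD_D (Wm \<theta> k) R DA dA dDA
        in dUPf k = blk dR 0 0 n n \<and> dKu k = blk dR 0 n n m
         \<and> dURe k = blk dR n n m m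
         \<and> dDPf k = blk dDR 0 0 n n \<and> dDRe k = blk dDR n n m m)"
    and B_ebar: "\<And>k. 1 \<le> k \<Longrightarrow> k \<le> N \<Longrightarrow>
       deb k = - ((minv (URe \<theta> k) * dURe k * minv (URe \<theta> k)) *\<^sub>v e \<theta> k)
         - minv (URe \<theta> k) *\<^sub>v (mat_pd i Z \<theta> *\<^sub>v ap \<theta> k + Z \<theta> *\<^sub>v dap k + mat_pd i \<beta> \<theta> *\<^sub>v x k)"
    and B_filt: "\<And>k. 1 \<le> k \<Longrightarrow> k \<le> N \<Longrightarrow>
       daf k = dap k + dKu k *\<^sub>v eb \<theta> k + Ku \<theta> k *\<^sub>v deb k"
begin

abbreviation line :: "real \<Rightarrow> 'a" where
  "line t \<equiv> \<theta> + t *\<^sub>R i"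

lemma mat_diff_deriv_line:
  "mat_diff nr nc F \<Longrightarrow> has_mat_deriv nr nc (\<lambda>t. F (line t)) (mat_pd i F \<theta>) 0"
  by (rule mat_diff_has_mat_deriv)

lemma SHinv_deriv:
  "has_mat_deriv n m (\<lambda>t. S (line t) * minv (H (line t)))
     (mat_pd i S \<theta> * minv (H \<theta>) - S \<theta> * minv (H \<theta>) * mat_pd i H \<theta> * minv (H \<theta>)) 0"
proof -
  note H = mat_diff_deriv_line[OF model_diff(6)] and S = mat_diff_deriv_line[OF model_diff(5)]
  have "det (H \<theta>') \<noteq> 0" for \<theta>'
    using pos_def_mat_det_nonzero[OF H_pd mat_diff_carrier[OF model_diff(6)]] .
  then have "has_mat_deriv m m (\<lambda>t. minv (H (line t)))
      (- (minv (H \<theta>) * mat_pd i H \<theta> * minv (H \<theta>))) 0"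
    using has_mat_deriv_minv[OF H] by simp
  moreover have "mat_pd i S \<theta> * minv (H \<theta>) + S \<theta> * - (minv (H \<theta>) * mat_pd i H \<theta> * minv (H \<theta>))
    = mat_pd i S \<theta> * minv (H \<theta>) - S \<theta> * minv (H \<theta>) * mat_pd i H \<theta> * minv (H \<theta>)"
    using has_mat_deriv_dim[OF S] has_mat_deriv_dim[OF H] carrier_matD[OF mat_diff_carrier[OF model_diff(5)]]
      carrier_matD[OF minv_carrier[OF mat_diff_carrier[OF model_diff(6)]]]
    by (intro eq_matI) (simp_all add: mat_dim_simps)
  ultimately show ?thesis
    using has_mat_deriv_mult[OF S] by fastforce
qed

lemma Tb_deriv: "has_mat_deriv n n (\<lambda>t. Tb (line t)) (mat_pd i Tb \<theta>) 0"
proof (rule has_mat_deriv_mat_pd)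
  show "has_mat_deriv n n (\<lambda>t. Tb (line t)) (mat_pd i T \<theta> - ((mat_pd i S \<theta> * minv (H \<theta>)
      - S \<theta> * minv (H \<theta>) * mat_pd i H \<theta> * minv (H \<theta>)) * Z \<theta>
      + S \<theta> * minv (H \<theta>) * mat_pd i Z \<theta>)) 0"
    unfolding Tb_def
    using has_mat_deriv_diff[OF mat_diff_deriv_line[OF model_diff(1)]
        has_mat_deriv_mult[OF SHinv_deriv mat_diff_deriv_line[OF model_diff(3)]]] by simp
qed

lemma Bb_deriv: "has_mat_deriv n r (\<lambda>t. Bb (line t)) (mat_pd i Bb \<theta>) 0"
proof (rule has_mat_deriv_mat_pd)
  show "has_mat_deriv n r (\<lambda>t. Bb (line t)) (mat_pd i B \<theta> - ((mat_pd i S \<theta> * minv (H \<theta>)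
      - S \<theta> * minv (H \<theta>) * mat_pd i H \<theta> * minv (H \<theta>)) * \<beta> \<theta>
      + S \<theta> * minv (H \<theta>) * mat_pd i \<beta> \<theta>)) 0"
    unfolding Bb_def
    using has_mat_deriv_diff[OF mat_diff_deriv_line[OF model_diff(2)]
        has_mat_deriv_mult[OF SHinv_deriv mat_diff_deriv_line[OF model_diff(4)]]] by simp
qed

lemma pred_deriv:
  assumes k: "1 \<le> k" "k \<le> N"
    and af: "has_vec_deriv n (\<lambda>t. af (line t) (k-1)) (daf (k-1)) 0"
  shows "has_vec_deriv n (\<lambda>t. ap (line t) k) (dap k) 0"
proof -
  let ?dSHi = "mat_pd i S \<theta> * minv (H \<theta>) - S \<theta> * minv (H \<theta>) * mat_pd i H \<theta> * minv (H \<theta>)"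
  have c: "S \<theta> \<in> carrier_mat n m" "mat_pd i S \<theta> \<in> carrier_mat n m" "minv (H \<theta>) \<in> carrier_mat m m"
    "mat_pd i H \<theta> \<in> carrier_mat m m"
    using mat_diff_carrier[OF model_diff(5)] has_mat_derivD(2)[OF mat_diff_deriv_line[OF model_diff(5)]]
      minv_carrier[OF mat_diff_carrier[OF model_diff(6)]]
      has_mat_derivD(2)[OF mat_diff_deriv_line[OF model_diff(6)]] .
  have "?dSHi *\<^sub>v y (k-1) = (mat_pd i S \<theta> * minv (H \<theta>)) *\<^sub>v y (k-1)
      - (S \<theta> * minv (H \<theta>) * mat_pd i H \<theta> * minv (H \<theta>)) *\<^sub>v y (k-1)"
    by (rule minus_mult_distrib_mat_vec[OF mult_carrier_mat[OF c(2,3)]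
          mult_carrier_mat[OF mult_carrier_mat[OF mult_carrier_mat[OF c(1,3)] c(4)] c(3)] data(2)])
  then have "(mat_pd i Tb \<theta> *\<^sub>v af \<theta> (k-1) + Tb \<theta> *\<^sub>v daf (k-1))
      + mat_pd i Bb \<theta> *\<^sub>v x (k-1) + ?dSHi *\<^sub>v y (k-1) = dap k"
    unfolding B_pred[OF k]
    using has_mat_deriv_dim(1)[OF Tb_deriv, of 0] has_mat_deriv_dim(3)[OF Tb_deriv]
      has_mat_deriv_dim(1)[OF Bb_deriv, of 0] has_mat_deriv_dim(3)[OF Bb_deriv] c
    by (intro eq_vecI) (auto simp: carrier_matD)
  moreover have "has_vec_deriv n (\<lambda>t. ap (line t) k) ((mat_pd i Tb \<theta> *\<^sub>v af \<theta> (k-1)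
      + Tb \<theta> *\<^sub>v daf (k-1)) + mat_pd i Bb \<theta> *\<^sub>v x (k-1) + ?dSHi *\<^sub>v y (k-1)) 0"
    using has_vec_deriv_add[OF has_vec_deriv_add[OF has_vec_deriv_mult_mat_vec[OF Tb_deriv af]
        has_vec_deriv_mult_mat_vec_const[OF Bb_deriv data(1)]]
        has_vec_deriv_mult_mat_vec_const[OF SHinv_deriv data(2)]]
    by (simp add: A_pred[OF k])
  ultimately show ?thesis
    by simp
qed

lemma time_update_deriv:
  assumes k: "1 \<le> k" "k \<le> N"
    and UPf: "has_mat_deriv n n (\<lambda>t. UPf (line t) (k-1)) (dUPf (k-1)) 0"
    and DPf: "has_mat_deriv n n (\<lambda>t. DPf (line t) (k-1)) (dDPf (k-1)) 0"
  shows "has_mat_deriv n n (\<lambda>t. UPp (line t) k) (dUPp k) 0"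
    and "has_mat_deriv n n (\<lambda>t. DPp (line t) k) (dDPp k) 0"
proof -
  have mw: "\<And>t. mwgs (transpose_mat (hcat (Tb (line t) * UPf (line t) (k-1)) (UQ (line t))))
      (dsum (DPf (line t) (k-1)) (DQ (line t))) (Wt (line t) k) (UPp (line t) k) (DPp (line t) k)"
    by (rule A_time[OF k])
  have A: "has_mat_deriv (n + n) n
      (\<lambda>t. transpose_mat (hcat (Tb (line t) * UPf (line t) (k-1)) (UQ (line t))))
      (transpose_mat (hcat (mat_pd i Tb \<theta> * UPf \<theta> (k-1) + Tb \<theta> * dUPf (k-1)) (mat_pd i UQ \<theta>))) 0"
    using has_mat_deriv_transpose[OF has_mat_deriv_hcat[OF has_mat_deriv_mult[OF Tb_deriv UPf]
        mat_diff_deriv_line[OF fact_diff(5)]]] by simp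
  note DA = has_mat_deriv_dsum[OF DPf mat_diff_deriv_line[OF fact_diff(6)]]
  have UPp: "has_mat_deriv n n (\<lambda>t. UPp (line t) k) (mat_pd i (\<lambda>\<theta>. UPp \<theta> k) \<theta>) 0"
    and DPp: "has_mat_deriv n n (\<lambda>t. DPp (line t) k) (mat_pd i (\<lambda>\<theta>. DPp \<theta> k) \<theta>) 0"
    using mat_diff_deriv_line A_diff[OF k(2)] by blast+
  have "mat_pd i (\<lambda>\<theta>. UPp \<theta> k) \<theta> = dUPp k" "mat_pd i (\<lambda>\<theta>. DPp \<theta> k) \<theta> = dDPp k"
    using diffUD_correct[OF mw A DA UPp DPp] B_time[OF k] by (simp_all add: Let_def)
  with UPp DPp show "has_mat_deriv n n (\<lambda>t. UPp (line t) k) (dUPp k) 0"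
    "has_mat_deriv n n (\<lambda>t. DPp (line t) k) (dDPp k) 0"
    by simp_all
qed

lemma meas_update_deriv:
  assumes k: "1 \<le> k" "k \<le> N"
    and UPp: "has_mat_deriv n n (\<lambda>t. UPp (line t) k) (dUPp k) 0"
    and DPp: "has_mat_deriv n n (\<lambda>t. DPp (line t) k) (dDPp k) 0"
  shows "has_mat_deriv n n (\<lambda>t. UPf (line t) k) (dUPf k) 0"
    and "has_mat_deriv n n (\<lambda>t. DPf (line t) k) (dDPf k) 0"
    and "has_mat_deriv m m (\<lambda>t. URe (line t) k) (dURe k) 0"
    and "has_mat_deriv m m (\<lambda>t. DRe (line t) k) (dDRe k) 0"
    and "has_mat_deriv n m (\<lambda>t. Ku (line t) k) (dKu k) 0"
proof -
  have mw: "\<And>t. mwgs (transpose_mat (four_block_mat (UPp (line t) k) (0\<^sub>m n m)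
        (Z (line t) * UPp (line t) k) (UH (line t))))
      (dsum (DPp (line t) k) (DH (line t))) (Wm (line t) k)
      (four_block_mat (UPf (line t) k) (Ku (line t) k) (0\<^sub>m m n) (URe (line t) k))
      (dsum (DPf (line t) k) (DRe (line t) k))"
    by (rule A_meas[OF k])
  have A: "has_mat_deriv (n + m) (n + m)
      (\<lambda>t. transpose_mat (four_block_mat (UPp (line t) k) (0\<^sub>m n m)
        (Z (line t) * UPp (line t) k) (UH (line t))))
      (transpose_mat (four_block_mat (dUPp k) (0\<^sub>m n m)
        (mat_pd i Z \<theta> * UPp \<theta> k + Z \<theta> * dUPp k) (mat_pd i UH \<theta>))) 0"
    using has_mat_deriv_transpose[OF has_mat_deriv_four_block[OF UPp
        has_mat_deriv_const[OF zero_carrier_mat] has_mat_deriv_mult[OF mat_diff_deriv_line[OF model_diff(3)] UPp]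
        mat_diff_deriv_line[OF fact_diff(3)]]] by simp
  note DA = has_mat_deriv_dsum[OF DPp mat_diff_deriv_line[OF fact_diff(4)]]
  have UPf: "has_mat_deriv n n (\<lambda>t. UPf (line t) k) (mat_pd i (\<lambda>\<theta>. UPf \<theta> k) \<theta>) 0"
    and DPf: "has_mat_deriv n n (\<lambda>t. DPf (line t) k) (mat_pd i (\<lambda>\<theta>. DPf \<theta> k) \<theta>) 0"
    and URe: "has_mat_deriv m m (\<lambda>t. URe (line t) k) (mat_pd i (\<lambda>\<theta>. URe \<theta> k) \<theta>) 0"
    and DRe: "has_mat_deriv m m (\<lambda>t. DRe (line t) k) (mat_pd i (\<lambda>\<theta>. DRe \<theta> k) \<theta>) 0"
    and Ku: "has_mat_deriv n m (\<lambda>t. Ku (line t) k) (mat_pd i (\<lambda>\<theta>. Ku \<theta> k) \<theta>) 0"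
    using mat_diff_deriv_line A_diff[OF k(2)] by blast+
  note R = has_mat_deriv_four_block[OF UPf Ku has_mat_deriv_const[OF zero_carrier_mat] URe]
  note DR = has_mat_deriv_dsum[OF DPf DRe]
  note pd_carrier = has_mat_derivD(2)[OF UPf] has_mat_derivD(2)[OF Ku] has_mat_derivD(2)[OF URe]
    has_mat_derivD(2)[OF DPf] has_mat_derivD(2)[OF DRe]
  have "mat_pd i (\<lambda>\<theta>. UPf \<theta> k) \<theta> = dUPf k" "mat_pd i (\<lambda>\<theta>. Ku \<theta> k) \<theta> = dKu k"
    "mat_pd i (\<lambda>\<theta>. URe \<theta> k) \<theta> = dURe k" "mat_pd i (\<lambda>\<theta>. DPf \<theta> k) \<theta> = dDPf k"
    "mat_pd i (\<lambda>\<theta>. DRe \<theta> k) \<theta> = dDRe k"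
    using B_meas[OF k] diffUD_correct[OF mw A DA R DR, symmetric]
      blk_four_block_mat[OF pd_carrier(1,2) zero_carrier_mat pd_carrier(3)]
      blk_dsum[OF pd_carrier(4,5)]
    by (simp_all add: Let_def)
  with UPf DPf URe DRe Ku show "has_mat_deriv n n (\<lambda>t. UPf (line t) k) (dUPf k) 0"
    "has_mat_deriv n n (\<lambda>t. DPf (line t) k) (dDPf k) 0"
    "has_mat_deriv m m (\<lambda>t. URe (line t) k) (dURe k) 0"
    "has_mat_deriv m m (\<lambda>t. DRe (line t) k) (dDRe k) 0"
    "has_mat_deriv n m (\<lambda>t. Ku (line t) k) (dKu k) 0"
    by simp_all
qed

lemma ebar_deriv:
  assumes k: "1 \<le> k" "k \<le> N"
    and ap: "has_vec_deriv n (\<lambda>t. ap (line t) k) (dap k) 0"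
    and URe: "has_mat_deriv m m (\<lambda>t. URe (line t) k) (dURe k) 0"
  shows "has_vec_deriv m (\<lambda>t. eb (line t) k) (deb k) 0"
proof -
  let ?de = "mat_pd i Z \<theta> *\<^sub>v ap \<theta> k + Z \<theta> *\<^sub>v dap k + mat_pd i \<beta> \<theta> *\<^sub>v x k"
  note Z = mat_diff_deriv_line[OF model_diff(3)] and \<beta> = mat_diff_deriv_line[OF model_diff(4)]
  have "has_vec_deriv m (\<lambda>t. e (line t) k)
      (0\<^sub>v m - (mat_pd i Z \<theta> *\<^sub>v ap \<theta> k + Z \<theta> *\<^sub>v dap k) - mat_pd i \<beta> \<theta> *\<^sub>v x k) 0"
    using has_vec_deriv_diff[OF has_vec_deriv_diff[OF has_vec_deriv_const[OF data(2)]
        has_vec_deriv_mult_mat_vec[OF Z ap]] has_vec_deriv_mult_mat_vec_const[OF \<beta> data(1)]]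
    by (simp add: A_innov[OF k])
  moreover have "0\<^sub>v m - (mat_pd i Z \<theta> *\<^sub>v ap \<theta> k + Z \<theta> *\<^sub>v dap k) - mat_pd i \<beta> \<theta> *\<^sub>v x k = - ?de"
    using has_mat_deriv_dim[OF Z] has_mat_deriv_dim[OF \<beta>] has_vec_deriv_dim[OF ap] data(1)
      carrier_matD[OF mat_diff_carrier[OF model_diff(3)]]
    by (intro eq_vecI) auto
  ultimately have e: "has_vec_deriv m (\<lambda>t. e (line t) k) (- ?de) 0"
    by simp
  have "det (URe \<theta>' k) \<noteq> 0" for \<theta>'
  proof -
    have c: "UPf \<theta>' k \<in> carrier_mat n n" "Ku \<theta>' k \<in> carrier_mat n m" "URe \<theta>' k \<in> carrier_mat m m"
      using A_diff[OF k(2)] mat_diff_carrier by blast+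
    have "unit_upper_triangular (four_block_mat (UPf \<theta>' k) (Ku \<theta>' k) (0\<^sub>m m n) (URe \<theta>' k))"
      using A_meas[OF k, of \<theta>'] unfolding mwgs_def Let_def by blast
    from unit_upper_triangular_four_block_lower_right[OF this c] show ?thesis
      using det_unit_upper_triangular c(3) by simp
  qed
  from has_mat_deriv_minv[OF URe this] have "has_mat_deriv m m (\<lambda>t. minv (URe (line t) k))
      (- (minv (URe \<theta> k) * dURe k * minv (URe \<theta> k))) 0"
    by simp
  note Ui = has_vec_deriv_mult_mat_vec[OF this e]
  have "- (minv (URe \<theta> k) * dURe k * minv (URe \<theta> k)) *\<^sub>v e \<theta> k + minv (URe \<theta> k) *\<^sub>v - ?de = deb k"
    unfolding B_ebar[OF k]
    using has_vec_deriv_dim(1)[OF e, of 0] has_mat_deriv_dim(1,2)[OF URe, of 0] has_mat_deriv_dim(3,4)[OF URe] has_mat_deriv_dim(3)[OF \<beta>]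
      carrier_matD[OF minv_carrier[OF has_mat_derivD(1)[OF URe, of 0]]]
    by (intro eq_vecI) auto
  with Ui show ?thesis
    by (simp add: A_ebar[OF k])
qed

lemma filt_deriv:
  assumes k: "1 \<le> k" "k \<le> N"
    and ap: "has_vec_deriv n (\<lambda>t. ap (line t) k) (dap k) 0"
    and Ku: "has_mat_deriv n m (\<lambda>t. Ku (line t) k) (dKu k) 0"
    and eb: "has_vec_deriv m (\<lambda>t. eb (line t) k) (deb k) 0"
  shows "has_vec_deriv n (\<lambda>t. af (line t) k) (daf k) 0"
proof -
  have "dap k + (dKu k *\<^sub>v eb \<theta> k + Ku \<theta> k *\<^sub>v deb k) = daf k"
    unfolding B_filt[OF k] using has_vec_deriv_dim[OF ap] has_mat_deriv_dim(1,2)[OF Ku, of 0] has_mat_deriv_dim(3,4)[OF Ku]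
    by (intro eq_vecI) auto
  with has_vec_deriv_add[OF ap has_vec_deriv_mult_mat_vec[OF Ku eb]] show ?thesis
    by (simp add: A_filt[OF k])
qed

lemma step_deriv:
  assumes k: "1 \<le> k" "k \<le> N"
    and UPf: "has_mat_deriv n n (\<lambda>t. UPf (line t) (k-1)) (dUPf (k-1)) 0"
    and DPf: "has_mat_deriv n n (\<lambda>t. DPf (line t) (k-1)) (dDPf (k-1)) 0"
    and af: "has_vec_deriv n (\<lambda>t. af (line t) (k-1)) (daf (k-1)) 0"
  shows "has_vec_deriv n (\<lambda>t. ap (line t) k) (dap k) 0"
    and "has_mat_deriv n n (\<lambda>t. UPp (line t) k) (dUPp k) 0"
    and "has_mat_deriv n n (\<lambda>t. DPp (line t) k) (dDPp k) 0"
    and "has_mat_deriv n n (\<lambda>t. UPf (line t) k) (dUPf k) 0"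
    and "has_mat_deriv n n (\<lambda>t. DPf (line t) k) (dDPf k) 0"
    and "has_mat_deriv m m (\<lambda>t. URe (line t) k) (dURe k) 0"
    and "has_mat_deriv m m (\<lambda>t. DRe (line t) k) (dDRe k) 0"
    and "has_mat_deriv n m (\<lambda>t. Ku (line t) k) (dKu k) 0"
    and "has_vec_deriv m (\<lambda>t. eb (line t) k) (deb k) 0"
    and "has_vec_deriv n (\<lambda>t. af (line t) k) (daf k) 0"
  using pred_deriv[OF k af] time_update_deriv[OF k UPf DPf]
    meas_update_deriv[OF k time_update_deriv[OF k UPf DPf]]
  by (blast intro: ebar_deriv filt_deriv k)+

lemma filtered_deriv:
  "k \<le> N \<Longrightarrow> has_mat_deriv n n (\<lambda>t. UPf (line t) k) (dUPf k) 0
    \<and> has_mat_deriv n n (\<lambda>t. DPf (line t) k) (dDPf k) 0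
    \<and> has_vec_deriv n (\<lambda>t. af (line t) k) (daf k) 0"
proof (induction k)
  case 0
  show ?case
    using mat_diff_deriv_line[OF fact_diff(1)] mat_diff_deriv_line[OF fact_diff(2)]
      vec_diff_has_vec_deriv[OF alpha0_diff] by (simp add: A_init B_init)
next
  case (Suc k)
  then show ?case
    using step_deriv(4,5,10)[of "Suc k"] by simp
qed

lemma mat_pd_line_eq: "has_mat_deriv nr nc (\<lambda>t. F (line t)) G 0 \<Longrightarrow> mat_pd i F \<theta> = G"
  by (rule mat_pd_eq)

lemma vec_pd_line_eq: "has_vec_deriv nr (\<lambda>t. v (line t)) G 0 \<Longrightarrow> vec_pd i v \<theta> = G"
  by (rule vec_pd_eq)

theorem sensitivities_correct:
  assumes k: "1 \<le> k" "k \<le> N"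
  shows "dap k = vec_pd i (\<lambda>\<theta>. ap \<theta> k) \<theta>
     \<and> dUPp k = mat_pd i (\<lambda>\<theta>. UPp \<theta> k) \<theta>
     \<and> dDPp k = mat_pd i (\<lambda>\<theta>. DPp \<theta> k) \<theta>
     \<and> dUPf k = mat_pd i (\<lambda>\<theta>. UPf \<theta> k) \<theta>
     \<and> dDPf k = mat_pd i (\<lambda>\<theta>. DPf \<theta> k) \<theta>
     \<and> dURe k = mat_pd i (\<lambda>\<theta>. URe \<theta> k) \<theta>
     \<and> dDRe k = mat_pd i (\<lambda>\<theta>. DRe \<theta> k) \<theta>
     \<and> dKu k = mat_pd i (\<lambda>\<theta>. Ku \<theta> k) \<theta>
     \<and> deb k = vec_pd i (\<lambda>\<theta>. eb \<theta> k) \<theta>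
     \<and> daf k = vec_pd i (\<lambda>\<theta>. af \<theta> k) \<theta>"
proof -
  have "k - 1 \<le> N"
    using k by simp
  note step = step_deriv[OF k filtered_deriv[OF this, THEN conjunct1]
      filtered_deriv[OF this, THEN conjunct2, THEN conjunct1]
      filtered_deriv[OF this, THEN conjunct2, THEN conjunct2]]
  show ?thesis
    using vec_pd_line_eq[OF step(1)] mat_pd_line_eq[OF step(2)] mat_pd_line_eq[OF step(3)]
      mat_pd_line_eq[OF step(4)] mat_pd_line_eq[OF step(5)] mat_pd_line_eq[OF step(6)]
      mat_pd_line_eq[OF step(7)] mat_pd_line_eq[OF step(8)] vec_pd_line_eq[OF step(9)]
      vec_pd_line_eq[OF step(10)] by simp
qed

end

theorem proposition2:
  fixes n m r N :: nat
    and T B Z \<beta> Q S H \<Pi>0 :: "'a::euclidean_space \<Rightarrow> real mat"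
    and \<alpha>0 :: "'a \<Rightarrow> real vec"
    and x y :: "nat \<Rightarrow> real vec"
    and U\<Pi> D\<Pi> UH DH UQ DQ :: "'a \<Rightarrow> real mat"
    \<comment> \<open>Algorithm 1a outputs (functions of \<theta> and k)\<close>
    and ap af e eb :: "'a \<Rightarrow> nat \<Rightarrow> real vec"
    and UPp DPp UPf DPf URe DRe Ku Wt Wm :: "'a \<Rightarrow> nat \<Rightarrow> real mat"
    \<comment> \<open>Algorithm 1b outputs (functions of i, \<theta> and k)\<close>
    and dap daf deb :: "'a \<Rightarrow> 'a \<Rightarrow> nat \<Rightarrow> real vec"
    and dUPp dDPp dUPf dDPf dURe dDRe dKu :: "'a \<Rightarrow> 'a \<Rightarrow> nat \<Rightarrow> real mat"
    and Tb Bb Qb :: "'a \<Rightarrow> real mat"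
  defines "Tb \<equiv> \<lambda>\<theta>. T \<theta> - S \<theta> * minv (H \<theta>) * Z \<theta>"
      and "Bb \<equiv> \<lambda>\<theta>. B \<theta> - S \<theta> * minv (H \<theta>) * \<beta> \<theta>"
      and "Qb \<equiv> \<lambda>\<theta>. Q \<theta> - S \<theta> * minv (H \<theta>) * transpose_mat (S \<theta>)"
  \<comment> \<open>model, differentiable in \<theta>\<close>
  assumes model_diff:
    "mat_diff n n T" "mat_diff n r B" "mat_diff m n Z" "mat_diff m r \<beta>"
    "mat_diff n n Q" "mat_diff n m S" "mat_diff m m H" "mat_diff n n \<Pi>0" "vec_diff n \<alpha>0"
    and data: "\<And>k. x k \<in> carrier_vec r" "\<And>k. y k \<in> carrier_vec m"
    and cov: "\<And>\<theta>. pos_semidef_mat (four_block_mat (Q \<theta>) (S \<theta>) (transpose_mat (S \<theta>)) (H \<theta>))"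
    and Pi0_pd: "\<And>\<theta>. pos_def_mat (\<Pi>0 \<theta>)"
    and H_pd: "\<And>\<theta>. pos_def_mat (H \<theta>)"
  \<comment> \<open>UD factorizations of \<Pi>0, H, Qbar (differentiable)\<close>
    and fact: "\<And>\<theta>. udu (\<Pi>0 \<theta>) (U\<Pi> \<theta>) (D\<Pi> \<theta>)" "\<And>\<theta>. udu (H \<theta>) (UH \<theta>) (DH \<theta>)"
              "\<And>\<theta>. udu (Qb \<theta>) (UQ \<theta>) (DQ \<theta>)"
    and fact_diff: "mat_diff n n U\<Pi>" "mat_diff n n D\<Pi>" "mat_diff m m UH" "mat_diff m m DH"
              "mat_diff n n UQ" "mat_diff n n DQ"
  \<comment> \<open>Algorithm 1a\<close>
    and A_init: "\<And>\<theta>. af \<theta> 0 = \<alpha>0 \<theta>" "\<And>\<theta>. UPf \<theta> 0 = U\<Pi> \<theta>" "\<And>\<theta>. DPf \<theta> 0 = D\<Pi> \<theta>"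
    and A_pred: "\<And>\<theta> k. 1 \<le> k \<Longrightarrow> k \<le> N \<Longrightarrow>
       ap \<theta> k = Tb \<theta> *\<^sub>v af \<theta> (k-1) + Bb \<theta> *\<^sub>v x (k-1) + (S \<theta> * minv (H \<theta>)) *\<^sub>v y (k-1)"
    and A_time: "\<And>\<theta> k. 1 \<le> k \<Longrightarrow> k \<le> N \<Longrightarrow>
       mwgs (transpose_mat (hcat (Tb \<theta> * UPf \<theta> (k-1)) (UQ \<theta>))) (dsum (DPf \<theta> (k-1)) (DQ \<theta>))
            (Wt \<theta> k) (UPp \<theta> k) (DPp \<theta> k)"
    and A_meas: "\<And>\<theta> k. 1 \<le> k \<Longrightarrow> k \<le> N \<Longrightarrow>
       mwgs (transpose_mat (four_block_mat (UPp \<theta> k) (0\<^sub>m n m) (Z \<theta> * UPp \<theta> k) (UH \<theta>)))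
            (dsum (DPp \<theta> k) (DH \<theta>))
            (Wm \<theta> k) (four_block_mat (UPf \<theta> k) (Ku \<theta> k) (0\<^sub>m m n) (URe \<theta> k))
            (dsum (DPf \<theta> k) (DRe \<theta> k))"
    and A_dims: "\<And>\<theta> k. k \<le> N \<Longrightarrow> UPf \<theta> k \<in> carrier_mat n n \<and> DPf \<theta> k \<in> carrier_mat n n
       \<and> Ku \<theta> k \<in> carrier_mat n m \<and> URe \<theta> k \<in> carrier_mat m m \<and> DRe \<theta> k \<in> carrier_mat m m"
    and A_innov: "\<And>\<theta> k. 1 \<le> k \<Longrightarrow> k \<le> N \<Longrightarrow> e \<theta> k = y k - Z \<theta> *\<^sub>v ap \<theta> k - \<beta> \<theta> *\<^sub>v x k"
    and A_ebar: "\<And>\<theta> k. 1 \<le> k \<Longrightarrow> k \<le> N \<Longrightarrow> eb \<theta> k = minv (URe \<theta> k) *\<^sub>v e \<theta> k"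
    and A_filt: "\<And>\<theta> k. 1 \<le> k \<Longrightarrow> k \<le> N \<Longrightarrow> af \<theta> k = ap \<theta> k + Ku \<theta> k *\<^sub>v eb \<theta> k"
  \<comment> \<open>all quantities of Algorithm 1a are differentiable in \<theta>\<close>
    and A_diff: "\<And>k. k \<le> N \<Longrightarrow>
       vec_diff n (\<lambda>\<theta>. ap \<theta> k) \<and> vec_diff n (\<lambda>\<theta>. af \<theta> k) \<and> vec_diff m (\<lambda>\<theta>. e \<theta> k)
       \<and> vec_diff m (\<lambda>\<theta>. eb \<theta> k)
       \<and> mat_diff n n (\<lambda>\<theta>. UPp \<theta> k) \<and> mat_diff n n (\<lambda>\<theta>. DPp \<theta> k)
       \<and> mat_diff n n (\<lambda>\<theta>. UPf \<theta> k) \<and> mat_diff n n (\<lambda>\<theta>. DPf \<theta> k)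
       \<and> mat_diff m m (\<lambda>\<theta>. URe \<theta> k) \<and> mat_diff m m (\<lambda>\<theta>. DRe \<theta> k)
       \<and> mat_diff n m (\<lambda>\<theta>. Ku \<theta> k)
       \<and> mat_diff (n + n) n (\<lambda>\<theta>. Wt \<theta> k) \<and> mat_diff (n + m) (n + m) (\<lambda>\<theta>. Wm \<theta> k)"
  \<comment> \<open>Algorithm 1b: initialization\<close>
    and B_init: "\<And>i \<theta>. i \<in> Basis \<Longrightarrow>
       dUPf i \<theta> 0 = mat_pd i U\<Pi> \<theta> \<and> dDPf i \<theta> 0 = mat_pd i D\<Pi> \<theta> \<and> daf i \<theta> 0 = vec_pd i \<alpha>0 \<theta>"
  \<comment> \<open>Algorithm 1b (a)\<close>
    and B_pred: "\<And>i \<theta> k. i \<in> Basis \<Longrightarrow> 1 \<le> k \<Longrightarrow> k \<le> N \<Longrightarrow>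
       dap i \<theta> k = mat_pd i Tb \<theta> *\<^sub>v af \<theta> (k-1) + Tb \<theta> *\<^sub>v daf i \<theta> (k-1)
         + mat_pd i Bb \<theta> *\<^sub>v x (k-1) + (mat_pd i S \<theta> * minv (H \<theta>)) *\<^sub>v y (k-1)
         - (S \<theta> * minv (H \<theta>) * mat_pd i H \<theta> * minv (H \<theta>)) *\<^sub>v y (k-1)"
  \<comment> \<open>Algorithm 1b (b), time update\<close>
    and B_time: "\<And>i \<theta> k. i \<in> Basis \<Longrightarrow> 1 \<le> k \<Longrightarrow> k \<le> N \<Longrightarrow>
       (let DA = dsum (DPf \<theta> (k-1)) (DQ \<theta>);
            dA = transpose_mat (hcat (mat_pd i Tb \<theta> * UPf \<theta> (k-1) + Tb \<theta> * dUPf i \<theta> (k-1))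
                                     (mat_pd i UQ \<theta>));
            dDA = dsum (dDPf i \<theta> (k-1)) (mat_pd i DQ \<theta>)
        in dUPp i \<theta> k = diffUD_R (Wt \<theta> k) (UPp \<theta> k) (DPp \<theta> k) DA dA dDA
         \<and> dDPp i \<theta> k = diffUD_D (Wt \<theta> k) (UPp \<theta> k) DA dA dDA)"
  \<comment> \<open>Algorithm 1b (b), measurement update\<close>
    and B_meas: "\<And>i \<theta> k. i \<in> Basis \<Longrightarrow> 1 \<le> k \<Longrightarrow> k \<le> N \<Longrightarrow>
       (let DA = dsum (DPp \<theta> k) (DH \<theta>);
            dA = transpose_mat (four_block_mat (dUPp i \<theta> k) (0\<^sub>m n m)
                    (mat_pd i Z \<theta> * UPp \<theta> k + Z \<theta> * dUPp i \<theta> k) (mat_pd i UH \<theta>));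
            dDA = dsum (dDPp i \<theta> k) (mat_pd i DH \<theta>);
            R = four_block_mat (UPf \<theta> k) (Ku \<theta> k) (0\<^sub>m m n) (URe \<theta> k);
            DR = dsum (DPf \<theta> k) (DRe \<theta> k);
            dR = diffUD_R (Wm \<theta> k) R DR DA dA dDA;
            dDR = diffUD_D (Wm \<theta> k) R DA dA dDA
        in dUPf i \<theta> k = blk dR 0 0 n n \<and> dKu i \<theta> k = blk dR 0 n n m
         \<and> dURe i \<theta> k = blk dR n n m m
         \<and> dDPf i \<theta> k = blk dDR 0 0 n n \<and> dDRe i \<theta> k = blk dDR n n m m)"
  \<comment> \<open>Algorithm 1b (c)\<close>
    and B_ebar: "\<And>i \<theta> k. i \<in> Basis \<Longrightarrow> 1 \<le> k \<Longrightarrow> k \<le> N \<Longrightarrow>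
       deb i \<theta> k = - ((minv (URe \<theta> k) * dURe i \<theta> k * minv (URe \<theta> k)) *\<^sub>v e \<theta> k)
         - minv (URe \<theta> k) *\<^sub>v (mat_pd i Z \<theta> *\<^sub>v ap \<theta> k + Z \<theta> *\<^sub>v dap i \<theta> k + mat_pd i \<beta> \<theta> *\<^sub>v x k)"
  \<comment> \<open>Algorithm 1b (d)\<close>
    and B_filt: "\<And>i \<theta> k. i \<in> Basis \<Longrightarrow> 1 \<le> k \<Longrightarrow> k \<le> N \<Longrightarrow>
       daf i \<theta> k = dap i \<theta> k + dKu i \<theta> k *\<^sub>v eb \<theta> k + Ku \<theta> k *\<^sub>v deb i \<theta> k"
  shows "\<forall>i\<in>Basis. \<forall>\<theta>. \<forall>k. 1 \<le> k \<and> k \<le> N \<longrightarrow>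
       dap i \<theta> k = vec_pd i (\<lambda>\<theta>. ap \<theta> k) \<theta>
     \<and> dUPp i \<theta> k = mat_pd i (\<lambda>\<theta>. UPp \<theta> k) \<theta>
     \<and> dDPp i \<theta> k = mat_pd i (\<lambda>\<theta>. DPp \<theta> k) \<theta>
     \<and> dUPf i \<theta> k = mat_pd i (\<lambda>\<theta>. UPf \<theta> k) \<theta>
     \<and> dDPf i \<theta> k = mat_pd i (\<lambda>\<theta>. DPf \<theta> k) \<theta>
     \<and> dURe i \<theta> k = mat_pd i (\<lambda>\<theta>. URe \<theta> k) \<theta>
     \<and> dDRe i \<theta> k = mat_pd i (\<lambda>\<theta>. DRe \<theta> k) \<theta>
     \<and> dKu i \<theta> k = mat_pd i (\<lambda>\<theta>. Ku \<theta> k) \<theta>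
     \<and> deb i \<theta> k = vec_pd i (\<lambda>\<theta>. eb \<theta> k) \<theta>
     \<and> daf i \<theta> k = vec_pd i (\<lambda>\<theta>. af \<theta> k) \<theta>"
proof -
  have sensitivity: "ud_filter_sensitivity n m r N T B Z \<beta> S H \<alpha>0 x y U\<Pi> D\<Pi> UH DH UQ DQ Tb Bb
      ap af e eb UPp DPp UPf DPf URe DRe Ku Wt Wm i \<theta> (dap i \<theta>) (daf i \<theta>) (deb i \<theta>)
      (dUPp i \<theta>) (dDPp i \<theta>) (dUPf i \<theta>) (dDPf i \<theta>) (dURe i \<theta>) (dDRe i \<theta>) (dKu i \<theta>)"
    if i: "i \<in> Basis" for i \<theta>
    by (unfold_locales; (fact model_diff data H_pd fact_diff A_init A_pred A_time A_meas A_innov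
          A_ebar A_filt B_pred[OF i] B_time[OF i] B_meas[OF i] B_ebar[OF i] B_filt[OF i]
        | simp add: Tb_def Bb_def A_diff B_init[OF i]))
  show ?thesis
    using ud_filter_sensitivity.sensitivities_correct[OF sensitivity] by blast
qed

end
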